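(* Let $A=\mathbb{C}[x_1,x_2,\dots]$ and let $d:A\to A$ be the derivation with $dx_1=0$ and $dx_i=x_{i-1}$ for $i>1$. For any integers $n\ge\ell\ge1$, any $i\ge0$, and any $\beta=(\beta_1,\dots,\beta_\ell)\in B^{(\ell)}_n(i)$, $$d\,g_{(\beta_1,\dots,\beta_\ell)}(\vec x)=\begin{cases}0,& i=0,\\ g_{(\beta_1-1,\beta_2,\dots,\beta_\ell)}(\vec x),& i>0.\end{cases}$$
   Context: For $n\ge\ell\ge1$, $B^{(\ell)}_n=\{\beta=(\beta_1,\dots,\beta_\ell)\in\mathbb{Z}^\ell:\beta_1,\dots,\beta_{\ell-1}\ge0,\ \beta_\ell\ge1,\ \beta_1+2\beta_2+\cdots+\ell\beta_\ell=n\}$. For $i\ge0$ and $n\ge\ell>1$, $B^{(\ell)}_n(i)=\{\beta\in B^{(\ell)}_n:\beta_1=i\}$; for $\ell=1$, $B^{(1)}_n(i)=\{(i+1)\}$ if $n=i+1$ and $\emptyset$ otherwise. For $\vec k=(k_1,\dots,k_\ell)$, $e_j(\vec k)$ is the $j$-th elementary symmetric polynomial and $e^\beta(\vec k)=e_1(\vec k)^{\beta_1}\cdots e_\ell(\vec k)^{\beta_\ell}$. For $\beta\in B^{(\ell)}_n$ the polynomial $g_\beta(\vec x)\in A$ is defined by $$\sum_{\substack{i_1,\dots,i_\ell\ge1\\ i_1+\cdots+i_\ell=n}} k_1^{i_1}\cdots k_\ell^{i_\ell}x_{i_1}\cdots x_{i_\ell}=\sum_{\beta\in B^{(\ell)}_n}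 e^\beta(k_1,\dots,k_\ell)\,g_\beta(\vec x)$$ (in particular $g_{(m)}(\vec x)=x_m$ for $\ell=1$). *)

theory Defs
  imports Complex_Main "HOL-Library.Poly_Mapping"
begin

text \<open>The variable x_i (i \<ge> 1) is the monomial with exponent 1 at index i.\<close>

type_synonym poly_A = "(nat \<Rightarrow>\<^sub>0 nat) \<Rightarrow>\<^sub>0 complex"

definition X :: "nat \<Rightarrow> poly_A" where
  "X i = Poly_Mapping.single (Poly_Mapping.single i 1) 1"

definition const :: "complex \<Rightarrow> poly_A" where
  "const c = Poly_Mapping.single 0 c"

definition is_d :: "(poly_A \<Rightarrow> poly_A) \<Rightarrow> bool" where
  "is_d d \<longleftrightarrow>
     (\<forall>p q. d (p + q) = d p + d q) \<and>
     (\<forall>p q. d (p * q) = p * d q + q * d p) \<and>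
     (\<forall>c p. d (const c * p) = const c * d p) \<and>
     d (X 1) = 0 \<and>
     (\<forall>i>1. d (X i) = X (i - 1))"

definition esym :: "nat \<Rightarrow> complex list \<Rightarrow> complex" where
  "esym j ks = (\<Sum>S\<in>{S. S \<subseteq> {..<length ks} \<and> card S = j}. \<Prod>s\<in>S. ks ! s)"

text \<open>beta = (beta_1,...,beta_l) is the list [beta!0, ..., beta!(l-1)].\<close>
definition ebeta :: "nat list \<Rightarrow> complex list \<Rightarrow> complex" where
  "ebeta \<beta> ks = (\<Prod>j<length \<beta>. esym (j + 1) ks ^ (\<beta> ! j))"

definition Bset :: "nat \<Rightarrow> nat \<Rightarrow> nat list set" where
  "Bset n l = {\<beta>. length \<beta> = l \<and> l \<ge> 1 \<and> \<beta> ! (l - 1) \<ge> 1 \<and>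
                   (\<Sum>j<l. (j + 1) * \<beta> ! j) = n}"

definition Bset_i :: "nat \<Rightarrow> nat \<Rightarrow> nat \<Rightarrow> nat list set" where
  "Bset_i n l i = (if l > 1 then {\<beta> \<in> Bset n l. \<beta> ! 0 = i}
                   else if l = 1 \<and> n = i + 1 then {[i + 1]} else {})"

definition gen_lhs :: "nat \<Rightarrow> complex list \<Rightarrow> poly_A" where
  "gen_lhs n ks = (\<Sum>is\<in>{is. length is = length ks \<and> (\<forall>a\<in>set is. a \<ge> 1) \<and> sum_list is = n}.
      const (\<Prod>j<length ks. (ks ! j) ^ (is ! j)) * (\<Prod>j<length ks. X (is ! j)))"

definition gfam :: "nat \<Rightarrow> nat \<Rightarrow> nat list \<Rightarrow> poly_A" where
  "gfam n l = (THE G. (\<forall>\<beta>. \<beta> \<notin> Bset n l \<longrightarrow> G \<beta> = 0) \<and>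
      (\<forall>ks. length ks = l \<longrightarrow> gen_lhs n ks = (\<Sum>\<beta>\<in>Bset n l. const (ebeta \<beta> ks) * G \<beta>)))"

definition g :: "nat list \<Rightarrow> poly_A" where
  "g \<beta> = gfam (\<Sum>j<length \<beta>. (j + 1) * \<beta> ! j) (length \<beta>) \<beta>"

end

theory Submission
  imports Defs "HOL-Computational_Algebra.Polynomial" "HOL-Combinatorics.Permutations"
begin

text \<open>Apply d to the defining identity. Since d x_i = x_(i-1) and d x_1 = 0, the summand
  k^i x_(i_1) \<cdots> x_(i_l) goes to the sum over j of k_j times a summand of weight n - 1, so d maps the
  left-hand side for n to e_1(k) times the one for n - 1; and e_1 e^\<beta> = e^\<beta>' with \<beta>'_1 = \<beta>_1 + 1.
  Comparing coefficients of the e^\<beta>, which are linearly independent over A, gives the claim.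
  Since g_\<beta> is defined implicitly, its existence needs the fundamental theorem on symmetric
  polynomials. That theorem and the independence are proved by induction on l and then on n,
  splitting off the part that survives k_l = 0 and dividing the rest by e_l = k_1 \<cdots> k_l.
  Polynomials in k are modelled as functions on complex lists whose values are A-linear
  combinations of monomials; coefficients are compared entrywise in A by the identity theorem
  for complex polynomials.\<close>

lemma const_mult: "const (a * b) = const a * const b"
  unfolding const_def by (simp add: mult_single)

lemma const_add: "const (a + b) = const a + const b"
  unfolding const_def by (simp add: single_add)

lemma const_0 [simp]: "const 0 = 0"
  unfolding const_def by simp

lemma const_1 [simp]: "const 1 = 1"
  unfolding const_def by simp

lemma const_sum: "const (sum f A) = (\<Sum>x\<in>A. const (f x))"
  by (induction A rule: infinite_finite_induct) (auto simp: const_add)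

lemma const_prod: "const (prod f A) = (\<Prod>x\<in>A. const (f x))"
  by (induction A rule: infinite_finite_induct) (auto simp: const_mult)

lemma const_power: "const (a ^ n) = const a ^ n"
  by (induction n) (auto simp: const_mult)

lemma lookup_const_mult: "Poly_Mapping.lookup (const a * p) m = a * Poly_Mapping.lookup p m"
  unfolding const_def mult_map_scale_conv_mult[symmetric]
  by (simp add: Poly_Mapping.map.rep_eq when_def)

definition monom_at :: "complex list \<Rightarrow> nat list \<Rightarrow> complex" where
  "monom_at ks es = (\<Prod>j<length ks. ks ! j ^ es ! j)"

lemma monom_at_Nil: "monom_at [] es = 1"
  unfolding monom_at_def by simp

lemma monom_at_Cons: "monom_at (z # ks) (e # es) = z ^ e * monom_at ks es"
  unfolding monom_at_def by (simp only: length_Cons prod.lessThan_Suc_shift) simp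

lemma monom_at_snoc:
  assumes "length es = length ks"
  shows "monom_at (ks @ [z]) (es @ [e]) = monom_at ks es * z ^ e"
proof -
  have "monom_at (ks @ [z]) (es @ [e])
      = (\<Prod>j<length ks. (ks @ [z]) ! j ^ (es @ [e]) ! j) * z ^ e"
    unfolding monom_at_def using assms by (simp add: nth_append)
  also have "(\<Prod>j<length ks. (ks @ [z]) ! j ^ (es @ [e]) ! j) = monom_at ks es"
    unfolding monom_at_def using assms by (intro prod.cong refl) (simp add: nth_append)
  finally show ?thesis .
qed

lemma monom_at_map2_add:
  "length es = length ks \<Longrightarrow> length fs = length ks \<Longrightarrow>
    monom_at ks (map2 (+) es fs) = monom_at ks es * monom_at ks fs"
  unfolding monom_at_def by (simp add: power_add prod.distrib)

lemma monom_at_incr: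
  assumes "length es = length ks" "j < length ks"
  shows "monom_at ks (es[j := es ! j + 1]) = ks ! j * monom_at ks es"
proof -
  let ?rest = "\<lambda>es. \<Prod>k\<in>{..<length ks} - {j}. ks ! k ^ es ! k"
  have "monom_at ks (es[j := es ! j + 1]) = ks ! j ^ (es ! j + 1) * ?rest (es[j := es ! j + 1])"
    and "monom_at ks es = ks ! j ^ es ! j * ?rest es"
    unfolding monom_at_def using assms by (simp_all add: prod.remove)
  moreover have "?rest (es[j := es ! j + 1]) = ?rest es"
    by (intro prod.cong) auto
  ultimately show ?thesis by simp
qed

lemma monom_at_update_0:
  assumes "length ks = length es" "j < length es"
  shows "monom_at (ks[j := 0]) es = (if es ! j = 0 then monom_at ks es else 0)"
proof (cases "es ! j = 0")
  case True
  then show ?thesis unfolding monom_at_def using assms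
    by (auto intro!: prod.cong simp: nth_list_update)
next
  case False
  have "monom_at (ks[j := 0]) es = 0" unfolding monom_at_def
    by (rule prod_zero) (use assms False in \<open>auto intro!: bexI[of _ j]\<close>)
  then show ?thesis using False by simp
qed

lemma transpose_permutes_lessThan: "i < l \<Longrightarrow> j < l \<Longrightarrow> transpose i j permutes {..<l}"
  by (simp add: permutes_swap_id)

lemma sum_list_permute_transpose:
  "i < length xs \<Longrightarrow> j < length xs \<Longrightarrow>
    sum_list (permute_list (transpose i j) xs) = sum_list (xs :: nat list)"
  by (metis mset_permute_list sum_mset_sum_list transpose_permutes_lessThan)

lemma monom_at_permute_transpose:
  assumes "length ks = l" "length es = l" "i < l" "j < l"
  shows "monom_at (permute_list (transpose i j) ks) es = monom_at ks (permute_list (transpose i j) es)"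
proof -
  let ?\<tau> = "transpose i j"
  have "monom_at (permute_list ?\<tau> ks) es = (\<Prod>k<l. ks ! ?\<tau> k ^ es ! k)"
    unfolding monom_at_def using assms by (auto simp: permute_list_def intro!: prod.cong)
  also have "\<dots> = (\<Prod>k<l. ks ! k ^ es ! ?\<tau> k)"
    using prod.permute[OF transpose_permutes_lessThan[OF assms(3,4)], of "\<lambda>k. ks ! ?\<tau> k ^ es ! k"]
    by (simp add: comp_def)
  also have "\<dots> = monom_at ks (permute_list ?\<tau> es)"
    unfolding monom_at_def using assms by (auto simp: permute_list_def intro!: prod.cong)
  finally show ?thesis .
qed

lemma esym_permute_transpose:
  assumes "i < length ks" "j < length ks"
  shows "esym m (permute_list (transpose i j) ks) = esym m ks"
proof -
  let ?\<tau> = "transpose i j" and ?I = "{S. S \<subseteq> {..<length ks} \<and> card S = m}"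
  have \<tau>_lt: "?\<tau> s < length ks" if "s < length ks" for s
    using that assms by (auto simp: transpose_def)
  have "esym m (permute_list ?\<tau> ks) = (\<Sum>S\<in>?I. \<Prod>s\<in>?\<tau> ` S. ks ! s)"
    unfolding esym_def using assms
    by (auto simp: permute_list_def prod.reindex intro!: sum.cong prod.cong)
  also have "\<dots> = (\<Sum>S\<in>?I. \<Prod>s\<in>S. ks ! s)"
    by (rule sum.reindex_bij_witness[where i="\<lambda>S. ?\<tau> ` S" and j="\<lambda>S. ?\<tau> ` S"])
       (auto simp: image_image card_image intro: \<tau>_lt)
  finally show ?thesis unfolding esym_def by simp
qed

lemma esym_snoc_0: "esym m (ks @ [0]) = esym m ks"
proof -
  let ?l = "length ks"
  have "esym m (ks @ [0]) = (\<Sum>S\<in>{S. S \<subseteq> {..<?l} \<and> card S = m}. \<Prod>s\<in>S. (ks @ [0]) ! s)"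
    unfolding esym_def
  proof (rule sum.mono_neutral_right)
    show "\<forall>S\<in>{S. S \<subseteq> {..<length (ks @ [0])} \<and> card S = m} - {S. S \<subseteq> {..<?l} \<and> card S = m}.
        (\<Prod>s\<in>S. (ks @ [0]) ! s) = 0"
    proof
      fix S assume S: "S \<in> {S. S \<subseteq> {..<length (ks @ [0])} \<and> card S = m} - {S. S \<subseteq> {..<?l} \<and> card S = m}"
      then have "?l \<in> S" by (auto simp: less_Suc_eq)
      moreover have "finite S" using S finite_subset by auto
      ultimately show "(\<Prod>s\<in>S. (ks @ [0]) ! s) = 0"
        by (intro prod_zero) (auto intro!: bexI[of _ ?l])
    qed
  qed auto
  also have "\<dots> = esym m ks"
    unfolding esym_def by (auto simp: nth_append intro!: sum.cong prod.cong)
  finally show ?thesis .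
qed

lemma esym_length: "esym (length ks) ks = (\<Prod>j<length ks. ks ! j)"
proof -
  have "{S. S \<subseteq> {..<length ks} \<and> card S = length ks} = {{..<length ks}}"
  proof (intro equalityI subsetI)
    fix S assume "S \<in> {S. S \<subseteq> {..<length ks} \<and> card S = length ks}"
    then show "S \<in> {{..<length ks}}"
      by (metis (mono_tags, lifting) card_lessThan card_subset_eq finite_lessThan mem_Collect_eq singletonI)
  qed auto
  then show ?thesis unfolding esym_def by simp
qed

lemma monom_at_map_Suc:
  "length es = length ks \<Longrightarrow> monom_at ks (map Suc es) = esym (length ks) ks * monom_at ks es"
  unfolding monom_at_def esym_length by (simp add: prod.distrib)

lemma esym_1: "esym 1 ks = (\<Sum>j<length ks. ks ! j)"
proof -
  have "{S. S \<subseteq> {..<length ks} \<and> card S = 1} = (\<lambda>j. {j}) ` {..<length ks}"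
    by (auto simp: card_1_singleton_iff)
  then show ?thesis unfolding esym_def by (simp add: sum.reindex)
qed

lemma esym_eq_0_if_gt:
  assumes "length ks < m"
  shows "esym m ks = 0"
proof -
  have empty: "{S. S \<subseteq> {..<length ks} \<and> card S = m} = {}"
  proof safe
    fix S assume "S \<subseteq> {..<length ks}" "m = card S"
    then have "card S \<le> length ks" using card_mono[of "{..<length ks}" S] by simp
    with assms \<open>m = card S\<close> show "S \<in> {}" by simp
  qed
  show ?thesis unfolding esym_def empty by simp
qed

lemma ebeta_permute_transpose:
  "i < length ks \<Longrightarrow> j < length ks \<Longrightarrow> ebeta \<beta> (permute_list (transpose i j) ks) = ebeta \<beta> ks"
  unfolding ebeta_def by (simp add: esym_permute_transpose)

lemma ebeta_snoc: "ebeta (\<beta> @ [a]) ks = ebeta \<beta> ks * esym (Suc (length \<beta>)) ks ^ a"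
proof -
  have "ebeta (\<beta> @ [a]) ks = (\<Prod>j<Suc (length \<beta>). esym (j + 1) ks ^ (\<beta> @ [a]) ! j)"
    unfolding ebeta_def by simp
  also have "\<dots> = (\<Prod>j<length \<beta>. esym (j + 1) ks ^ (\<beta> @ [a]) ! j) * esym (Suc (length \<beta>)) ks ^ a"
    by (simp only: prod.lessThan_Suc) simp
  also have "(\<Prod>j<length \<beta>. esym (j + 1) ks ^ (\<beta> @ [a]) ! j) = ebeta \<beta> ks"
    unfolding ebeta_def by (intro prod.cong refl) (simp add: nth_append)
  finally show ?thesis .
qed

lemma ebeta_ks_snoc_0: "ebeta \<beta> (ks @ [0]) = ebeta \<beta> ks"
  unfolding ebeta_def by (simp add: esym_snoc_0)

lemma ebeta_Cons_Suc: "ebeta (Suc a # \<beta>) ks = esym 1 ks * ebeta (a # \<beta>) ks"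
  unfolding ebeta_def by (simp only: length_Cons prod.lessThan_Suc_shift) simp

definition weight :: "nat list \<Rightarrow> nat" where
  "weight \<beta> = (\<Sum>j<length \<beta>. (j + 1) * \<beta> ! j)"

definition wparts :: "nat \<Rightarrow> nat \<Rightarrow> nat list set" where
  "wparts n l = {\<beta>. length \<beta> = l \<and> weight \<beta> = n}"

lemma weight_snoc: "weight (\<beta> @ [a]) = weight \<beta> + Suc (length \<beta>) * a"
proof -
  have "weight (\<beta> @ [a]) = (\<Sum>j<Suc (length \<beta>). (j + 1) * (\<beta> @ [a]) ! j)"
    unfolding weight_def by simp
  also have "\<dots> = (\<Sum>j<length \<beta>. (j + 1) * (\<beta> @ [a]) ! j) + Suc (length \<beta>) * a"
    by (simp only: sum.lessThan_Suc) simp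
  also have "(\<Sum>j<length \<beta>. (j + 1) * (\<beta> @ [a]) ! j) = weight \<beta>"
    unfolding weight_def by (intro sum.cong refl) (simp add: nth_append)
  finally show ?thesis .
qed

lemma weight_Cons: "weight (a # \<beta>) = a + (\<Sum>j<length \<beta>. (j + 2) * \<beta> ! j)"
  unfolding weight_def by (simp only: length_Cons sum.lessThan_Suc_shift) simp

lemma nth_le_weight:
  assumes "j < length \<beta>"
  shows "\<beta> ! j \<le> weight \<beta>"
proof -
  have "\<beta> ! j \<le> (j + 1) * \<beta> ! j" by simp
  also have "\<dots> \<le> weight \<beta>" unfolding weight_def
    by (rule member_le_sum[where f="\<lambda>j. (j + 1) * \<beta> ! j"]) (use assms in auto)
  finally show ?thesis .
qed

lemma finite_wparts: "finite (wparts n l)"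
proof -
  have "wparts n l \<subseteq> {xs. set xs \<subseteq> {0..n} \<and> length xs = l}"
  proof safe
    fix \<beta> x assume "\<beta> \<in> wparts n l" "x \<in> set \<beta>"
    then show "x \<in> {0..n}"
      by (auto simp: wparts_def in_set_conv_nth dest!: nth_le_weight)
  qed (simp add: wparts_def)
  then show ?thesis using finite_lists_length_eq[of "{0..n}" l] finite_subset by blast
qed

definition incr_last :: "nat list \<Rightarrow> nat list" where
  "incr_last \<beta> = butlast \<beta> @ [last \<beta> + 1]"

lemma inj_on_incr_last: "inj_on incr_last {\<gamma>. \<gamma> \<noteq> []}"
proof (rule inj_onI)
  fix x y assume "x \<in> {\<gamma>. \<gamma> \<noteq> []}" "y \<in> {\<gamma>. \<gamma> \<noteq> []}" "incr_last x = incr_last y"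
  then have "x \<noteq> []" "y \<noteq> []" "butlast x = butlast y" "last x = last y"
    by (auto simp: incr_last_def)
  then show "x = y" by (metis append_butlast_last_id)
qed

lemma ebeta_incr_last:
  assumes "\<gamma> \<noteq> []"
  shows "ebeta (incr_last \<gamma>) ks = ebeta \<gamma> ks * esym (length \<gamma>) ks"
proof -
  obtain xs b where "\<gamma> = xs @ [b]" using assms by (cases \<gamma> rule: rev_exhaust) auto
  then show ?thesis by (simp add: incr_last_def ebeta_snoc)
qed

lemma incr_last_in_wparts:
  assumes "\<gamma> \<in> wparts (n - Suc l) (Suc l)" "Suc l \<le> n"
  shows "incr_last \<gamma> \<in> wparts n (Suc l)"
proof -
  obtain xs b where "\<gamma> = xs @ [b]" using assms(1) by (cases \<gamma> rule: rev_exhaust) (auto simp: wparts_def)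
  then show ?thesis using assms by (auto simp: wparts_def incr_last_def weight_snoc)
qed

lemma esym_mult_ebeta_expansion:
  "const (esym l ks) * (\<Sum>\<gamma>\<in>wparts m l. const (ebeta \<gamma> ks) * C \<gamma>)
    = (\<Sum>\<gamma>\<in>wparts m l. const (ebeta (incr_last \<gamma>) ks) * C \<gamma>)" if "l \<noteq> 0"
  unfolding sum_distrib_left
proof (intro sum.cong refl)
  fix \<gamma> assume "\<gamma> \<in> wparts m l"
  then have "\<gamma> \<noteq> []" "length \<gamma> = l" using that by (auto simp: wparts_def)
  then show "const (esym l ks) * (const (ebeta \<gamma> ks) * C \<gamma>) = const (ebeta (incr_last \<gamma>) ks) * C \<gamma>"
    by (simp add: ebeta_incr_last const_mult mult_ac)
qed

lemma wparts_Suc_eq: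
  "wparts n (Suc l) = (\<lambda>\<beta>. \<beta> @ [0]) ` wparts n l \<union>
     (if Suc l \<le> n then incr_last ` wparts (n - Suc l) (Suc l) else {})"
proof (intro equalityI subsetI)
  fix \<beta> assume \<beta>: "\<beta> \<in> wparts n (Suc l)"
  then obtain xs a where xa: "\<beta> = xs @ [a]"
    by (cases \<beta> rule: rev_exhaust) (auto simp: wparts_def)
  show "\<beta> \<in> (\<lambda>\<beta>. \<beta> @ [0]) ` wparts n l \<union>
      (if Suc l \<le> n then incr_last ` wparts (n - Suc l) (Suc l) else {})"
  proof (cases a)
    case 0
    then show ?thesis using \<beta> by (auto simp: wparts_def xa weight_snoc)
  next
    case (Suc b)
    then have "xs @ [b] \<in> wparts (n - Suc l) (Suc l)" "Suc l \<le> n" "\<beta> = incr_last (xs @ [b])"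
      using \<beta> by (auto simp: wparts_def xa weight_snoc incr_last_def)
    then show ?thesis by auto
  qed
next
  fix \<beta> assume "\<beta> \<in> (\<lambda>\<beta>. \<beta> @ [0]) ` wparts n l \<union>
      (if Suc l \<le> n then incr_last ` wparts (n - Suc l) (Suc l) else {})"
  then show "\<beta> \<in> wparts n (Suc l)"
    using incr_last_in_wparts by (auto simp: wparts_def weight_snoc split: if_splits)
qed

lemma sum_wparts_Suc:
  "(\<Sum>\<beta>\<in>wparts n (Suc l). T \<beta>) = (\<Sum>\<beta>\<in>wparts n l. T (\<beta> @ [0])) +
     (if Suc l \<le> n then (\<Sum>\<gamma>\<in>wparts (n - Suc l) (Suc l). T (incr_last \<gamma>)) else 0)"
proof -
  have "(\<lambda>\<beta>. \<beta> @ [0]) ` wparts n l \<inter> (if Suc l \<le> n then incr_last ` wparts (n - Suc l) (Suc l) else {}) = {}"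
    by (auto simp: incr_last_def)
  moreover have "inj_on (\<lambda>\<beta>. \<beta> @ [0]) (wparts n l)" by (auto simp: inj_on_def)
  moreover have "inj_on incr_last (wparts (n - Suc l) (Suc l))"
    by (rule inj_on_subset[OF inj_on_incr_last]) (auto simp: wparts_def)
  ultimately show ?thesis
    unfolding wparts_Suc_eq[of n l] by (simp add: sum.union_disjoint finite_wparts sum.reindex)
qed

lemma Bset_eq: "Bset n l = {\<beta> \<in> wparts n l. 1 \<le> l \<and> 1 \<le> \<beta> ! (l - 1)}"
  unfolding Bset_def wparts_def weight_def by auto

lemma Bset_subset_wparts: "Bset n l \<subseteq> wparts n l"
  unfolding Bset_eq by auto

lemma Bset_Suc_eq_incr_last:
  "Bset n (Suc l) = (if Suc l \<le> n then incr_last ` wparts (n - Suc l) (Suc l) else {})"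
proof (intro equalityI subsetI)
  fix \<beta> assume \<beta>: "\<beta> \<in> Bset n (Suc l)"
  then obtain xs a where xa: "\<beta> = xs @ [a]" and len: "length xs = l"
    by (cases \<beta> rule: rev_exhaust) (auto simp: Bset_eq wparts_def)
  from \<beta> obtain c where c: "a = Suc c"
    by (cases a) (auto simp: Bset_eq wparts_def xa nth_append len)
  from \<beta> have "Suc l \<le> n" "xs @ [c] \<in> wparts (n - Suc l) (Suc l)"
    by (auto simp: Bset_eq wparts_def xa c weight_snoc len)
  moreover have "\<beta> = incr_last (xs @ [c])" by (simp add: xa c incr_last_def)
  ultimately show "\<beta> \<in> (if Suc l \<le> n then incr_last ` wparts (n - Suc l) (Suc l) else {})"
    by simp
next
  fix \<beta> assume "\<beta> \<in> (if Suc l \<le> n then incr_last ` wparts (n - Suc l) (Suc l) else {})"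
  then obtain \<gamma> where le: "Suc l \<le> n" and \<gamma>: "\<gamma> \<in> wparts (n - Suc l) (Suc l)"
    and \<beta>: "\<beta> = incr_last \<gamma>"
    by (auto split: if_splits)
  from \<gamma> obtain xs a where xa: "\<gamma> = xs @ [a]" and len: "length xs = l"
    by (cases \<gamma> rule: rev_exhaust) (auto simp: wparts_def)
  show "\<beta> \<in> Bset n (Suc l)"
    using \<gamma> le by (simp add: \<beta> xa len Bset_eq wparts_def incr_last_def weight_snoc nth_append)
qed

lemma sum_Bset_Suc:
  "(\<Sum>\<beta>\<in>Bset n (Suc l). T \<beta>) =
    (if Suc l \<le> n then (\<Sum>\<gamma>\<in>wparts (n - Suc l) (Suc l). T (incr_last \<gamma>)) else 0)"
proof -
  have "inj_on incr_last (wparts (n - Suc l) (Suc l))"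
    by (rule inj_on_subset[OF inj_on_incr_last]) (auto simp: wparts_def)
  then show ?thesis by (simp add: Bset_Suc_eq_incr_last sum.reindex)
qed

section \<open>Comparing coefficients of polynomial functions\<close>

lemma power_sum_eq_0_imp_coeff_eq_0:
  fixes p :: "nat \<Rightarrow> complex"
  assumes "finite B" "\<And>z. (\<Sum>b\<in>B. z ^ b * p b) = 0" "b \<in> B"
  shows "p b = 0"
proof -
  define q where "q = (\<Sum>b\<in>B. monom (p b) b)"
  have "poly q = poly 0"
    using assms(2) by (auto simp: q_def poly_sum poly_monom fun_eq_iff mult.commute)
  then have "coeff q b = 0" by (simp add: poly_eq_poly_eq_iff)
  moreover have "coeff q b = p b"
    unfolding q_def coeff_sum coeff_monom using assms(1,3) by (simp add: sum.delta)
  ultimately show ?thesis by simp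
qed

lemma monom_sum_eq_0_imp_coeff_eq_0:
  fixes a :: "nat list \<Rightarrow> complex"
  assumes "finite F" "\<forall>es\<in>F. length es = l"
    "\<forall>ks. length ks = l \<longrightarrow> (\<Sum>es\<in>F. monom_at ks es * a es) = 0" "es \<in> F"
  shows "a es = 0"
  using assms
proof (induction l arbitrary: F a es)
  case 0
  then have "F = {[]}" by auto
  with 0 show ?case by (auto simp: monom_at_Nil)
next
  case (Suc l)
  obtain b t where es: "es = b # t" using Suc.prems(2,4) by (cases es) auto
  define R where "R b = {t. b # t \<in> F}" for b
  have fin_R: "finite (R b)" for b
    using finite_surj[OF Suc.prems(1), of "R b" tl] by (force simp: R_def image_iff)
  have len_R: "\<forall>t\<in>R b. length t = l" for b using Suc.prems(2) by (auto simp: R_def)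
  have grouped: "(\<Sum>es\<in>F. monom_at (z # ks) es * a es)
      = (\<Sum>b\<in>hd ` F. z ^ b * (\<Sum>t\<in>R b. monom_at ks t * a (b # t)))" for z ks
  proof -
    have "(\<Sum>es\<in>F. monom_at (z # ks) es * a es)
        = (\<Sum>b\<in>hd ` F. \<Sum>es\<in>{x\<in>F. hd x = b}. monom_at (z # ks) es * a es)"
      using Suc.prems(1) by (rule sum.image_gen)
    also have "\<dots> = (\<Sum>b\<in>hd ` F. z ^ b * (\<Sum>t\<in>R b. monom_at ks t * a (b # t)))"
    proof (rule sum.cong[OF refl])
      fix b
      have "{x\<in>F. hd x = b} = Cons b ` R b"
        using Suc.prems(2) by (auto simp: R_def image_iff) (metis length_0_conv list.collapse nat.simps(3))
      then show "(\<Sum>es\<in>{x\<in>F. hd x = b}. monom_at (z # ks) es * a es)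
          = z ^ b * (\<Sum>t\<in>R b. monom_at ks t * a (b # t))"
        by (simp add: sum.reindex monom_at_Cons sum_distrib_left mult.assoc)
    qed
    finally show ?thesis .
  qed
  have zero: "\<forall>ks. length ks = l \<longrightarrow> (\<Sum>t\<in>R b. monom_at ks t * a (b # t)) = 0"
  proof (intro allI impI)
    fix ks :: "complex list" assume len: "length ks = l"
    show "(\<Sum>t\<in>R b. monom_at ks t * a (b # t)) = 0"
    proof (rule power_sum_eq_0_imp_coeff_eq_0[where B="hd ` F"])
      show "finite (hd ` F)" "b \<in> hd ` F" using Suc.prems(1,4) es by force+
      show "(\<Sum>b\<in>hd ` F. z ^ b * (\<Sum>t\<in>R b. monom_at ks t * a (b # t))) = 0" for z
        using Suc.prems(3) grouped[of z ks] len by (metis length_Cons)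
    qed
  qed
  moreover have "t \<in> R b" using Suc.prems(4) es by (simp add: R_def)
  ultimately show ?case using Suc.IH[OF fin_R len_R] by (simp add: es)
qed

definition poly_eval :: "(nat list \<Rightarrow> poly_A) \<Rightarrow> nat list set \<Rightarrow> complex list \<Rightarrow> poly_A" where
  "poly_eval c F ks = (\<Sum>es\<in>F. const (monom_at ks es) * c es)"

lemma poly_eval_eq_0_imp_coeff_eq_0:
  assumes "finite F" "\<forall>es\<in>F. length es = l"
    "\<forall>ks. length ks = l \<longrightarrow> poly_eval c F ks = 0" "es \<in> F"
  shows "c es = 0"
proof (rule poly_mapping_eqI)
  fix m
  have "Poly_Mapping.lookup (c es) m = 0"
  proof (rule monom_sum_eq_0_imp_coeff_eq_0[OF assms(1,2) _ assms(4)], intro allI impI)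
    fix ks :: "complex list" assume "length ks = l"
    then have "Poly_Mapping.lookup (poly_eval c F ks) m = 0" using assms(3) by simp
    then show "(\<Sum>es\<in>F. monom_at ks es * Poly_Mapping.lookup (c es) m) = 0"
      by (simp add: poly_eval_def lookup_sum lookup_const_mult)
  qed
  then show "Poly_Mapping.lookup (c es) m = Poly_Mapping.lookup 0 m" by simp
qed

section \<open>Homogeneous polynomial functions\<close>

definition wcomps :: "nat \<Rightarrow> nat \<Rightarrow> nat list set" where
  "wcomps l n = {es. length es = l \<and> sum_list es = n}"

lemma finite_wcomps: "finite (wcomps l n)"
proof -
  have "wcomps l n \<subseteq> {xs. set xs \<subseteq> {0..n} \<and> length xs = l}"
    unfolding wcomps_def using member_le_sum_list by fastforce
  then show ?thesis using finite_lists_length_eq[of "{0..n}" l] finite_subset by blast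
qed

lemma sum_list_map_Suc: "sum_list (map Suc xs) = sum_list xs + length xs"
  by (induction xs) auto

lemma length_le_sum_list: "\<forall>a\<in>set es. a \<noteq> 0 \<Longrightarrow> length es \<le> sum_list (es :: nat list)"
  by (induction es) auto

lemma map_Suc_in_wcomps_iff: "map Suc es \<in> wcomps l n \<longleftrightarrow> length es = l \<and> l \<le> n \<and> es \<in> wcomps l (n - l)"
  by (auto simp: wcomps_def sum_list_map_Suc)

lemma image_map_Suc_wcomps:
  assumes "l \<le> n"
  shows "map Suc ` wcomps l (n - l) = {es \<in> wcomps l n. \<forall>a\<in>set es. a \<noteq> 0}"
proof (intro equalityI subsetI)
  fix es assume "es \<in> map Suc ` wcomps l (n - l)"
  then obtain fs where "fs \<in> wcomps l (n - l)" "es = map Suc fs" by blast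
  with assms show "es \<in> {es \<in> wcomps l n. \<forall>a\<in>set es. a \<noteq> 0}"
    by (auto simp: wcomps_def sum_list_map_Suc)
next
  fix es assume es: "es \<in> {es \<in> wcomps l n. \<forall>a\<in>set es. a \<noteq> 0}"
  then have "es = map Suc (map (\<lambda>a. a - 1) es)" by (auto intro!: map_idI[symmetric])
  with es show "es \<in> map Suc ` wcomps l (n - l)"
    by (metis (mono_tags, lifting) image_eqI length_map map_Suc_in_wcomps_iff mem_Collect_eq)
qed

definition homogeneous :: "nat \<Rightarrow> nat \<Rightarrow> (complex list \<Rightarrow> poly_A) \<Rightarrow> bool" where
  "homogeneous l n f \<longleftrightarrow> (\<exists>c. \<forall>ks. length ks = l \<longrightarrow> f ks = poly_eval c (wcomps l n) ks)"

lemma homogeneousI: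
  assumes "finite I" "ex ` I \<subseteq> wcomps l n"
    "\<And>ks. length ks = l \<Longrightarrow> f ks = (\<Sum>i\<in>I. const (monom_at ks (ex i)) * a i)"
  shows "homogeneous l n f"
  unfolding homogeneous_def
proof (intro exI allI impI)
  define c where "c es = (\<Sum>i\<in>{x\<in>I. ex x = es}. a i)" for es
  fix ks :: "complex list" assume "length ks = l"
  then have "f ks = (\<Sum>i\<in>I. const (monom_at ks (ex i)) * a i)" by (rule assms(3))
  also have "\<dots> = (\<Sum>es\<in>ex ` I. \<Sum>i\<in>{x\<in>I. ex x = es}. const (monom_at ks (ex i)) * a i)"
    using assms(1) by (rule sum.image_gen)
  also have "\<dots> = poly_eval c (ex ` I) ks"
    unfolding poly_eval_def c_def by (auto simp: sum_distrib_left intro!: sum.cong)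
  also have "\<dots> = poly_eval c (wcomps l n) ks"
  proof -
    have "c es = 0" if "es \<notin> ex ` I" for es
      unfolding c_def by (rule sum.neutral) (use that in auto)
    then show ?thesis unfolding poly_eval_def
      by (intro sum.mono_neutral_left[OF finite_wcomps assms(2)]) auto
  qed
  finally show "f ks = poly_eval c (wcomps l n) ks" .
qed

lemma homogeneous_poly_eval: "F \<subseteq> wcomps l n \<Longrightarrow> homogeneous l n (poly_eval c F)"
  by (rule homogeneousI[of F id]) (auto simp: poly_eval_def intro: finite_subset[OF _ finite_wcomps])

lemma homogeneous_0: "homogeneous l n (\<lambda>_. 0)"
  by (rule homogeneousI[of "{}"]) auto

lemma homogeneous_1: "homogeneous l 0 (\<lambda>_. 1)"
  by (rule homogeneousI[where I="{replicate l 0}" and ex=id and a="\<lambda>_. 1"])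
     (auto simp: wcomps_def monom_at_def nth_replicate)

lemma homogeneous_add:
  assumes "homogeneous l n f" "homogeneous l n h"
  shows "homogeneous l n (\<lambda>ks. f ks + h ks)"
proof -
  obtain c c' where "\<forall>ks. length ks = l \<longrightarrow> f ks = poly_eval c (wcomps l n) ks"
    "\<forall>ks. length ks = l \<longrightarrow> h ks = poly_eval c' (wcomps l n) ks"
    using assms unfolding homogeneous_def by blast
  then show ?thesis unfolding homogeneous_def
    by (intro exI[of _ "\<lambda>es. c es + c' es"]) (auto simp: poly_eval_def distrib_left sum.distrib)
qed

lemma homogeneous_mult_right:
  assumes "homogeneous l n f"
  shows "homogeneous l n (\<lambda>ks. f ks * p)"
proof -
  obtain c where "\<forall>ks. length ks = l \<longrightarrow> f ks = poly_eval c (wcomps l n) ks"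
    using assms unfolding homogeneous_def by blast
  then show ?thesis unfolding homogeneous_def
    by (intro exI[of _ "\<lambda>es. c es * p"]) (auto simp: poly_eval_def sum_distrib_right mult.assoc)
qed

lemma homogeneous_diff:
  assumes "homogeneous l n f" "homogeneous l n h"
  shows "homogeneous l n (\<lambda>ks. f ks - h ks)"
  using homogeneous_add[OF assms(1) homogeneous_mult_right[OF assms(2), of "-1"]] by simp

lemma homogeneous_sum:
  "finite A \<Longrightarrow> (\<And>x. x \<in> A \<Longrightarrow> homogeneous l n (f x)) \<Longrightarrow> homogeneous l n (\<lambda>ks. \<Sum>x\<in>A. f x ks)"
  by (induction A rule: finite_induct) (auto intro: homogeneous_0 homogeneous_add)

lemma homogeneous_mult:
  assumes "homogeneous l n f" "homogeneous l m h"
  shows "homogeneous l (n + m) (\<lambda>ks. f ks * h ks)"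
proof -
  obtain c c' where
    c: "\<forall>ks. length ks = l \<longrightarrow> f ks = poly_eval c (wcomps l n) ks" and
    c': "\<forall>ks. length ks = l \<longrightarrow> h ks = poly_eval c' (wcomps l m) ks"
    using assms unfolding homogeneous_def by blast
  show ?thesis
  proof (rule homogeneousI[where I="wcomps l n \<times> wcomps l m" and ex="\<lambda>(es, fs). map2 (+) es fs"
        and a="\<lambda>(es, fs). c es * c' fs"])
    show "finite (wcomps l n \<times> wcomps l m)" by (simp add: finite_wcomps)
    show "(\<lambda>(es, fs). map2 (+) es fs) ` (wcomps l n \<times> wcomps l m) \<subseteq> wcomps l (n + m)"
      by (auto simp: wcomps_def sum_list_sum_nth sum.distrib)
    fix ks :: "complex list" assume l: "length ks = l"
    have "f ks * h ks = (\<Sum>(es, fs)\<in>wcomps l n \<times> wcomps l m.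
        const (monom_at ks es) * c es * (const (monom_at ks fs) * c' fs))"
      using c c' l by (simp add: poly_eval_def sum_product sum.cartesian_product)
    also have "\<dots> = (\<Sum>i\<in>wcomps l n \<times> wcomps l m.
        const (monom_at ks ((\<lambda>(es, fs). map2 (+) es fs) i)) * (\<lambda>(es, fs). c es * c' fs) i)"
      using l by (intro sum.cong refl) (auto simp: wcomps_def monom_at_map2_add const_mult mult_ac)
    finally show "f ks * h ks = (\<Sum>i\<in>wcomps l n \<times> wcomps l m.
        const (monom_at ks ((\<lambda>(es, fs). map2 (+) es fs) i)) * (\<lambda>(es, fs). c es * c' fs) i)" .
  qed
qed

lemma homogeneous_power: "homogeneous l n f \<Longrightarrow> homogeneous l (n * k) (\<lambda>ks. f ks ^ k)"
proof (induction k)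
  case 0
  then show ?case using homogeneous_1 by simp
next
  case (Suc k)
  then show ?case using homogeneous_mult[OF Suc.prems Suc.IH[OF Suc.prems]] by (simp add: add.commute)
qed

lemma homogeneous_prod:
  "finite A \<Longrightarrow> (\<And>x. x \<in> A \<Longrightarrow> homogeneous l (n x) (f x)) \<Longrightarrow>
    homogeneous l (\<Sum>x\<in>A. n x) (\<lambda>ks. \<Prod>x\<in>A. f x ks)"
  by (induction A rule: finite_induct) (auto intro: homogeneous_1 homogeneous_mult)

lemma homogeneous_esym: "homogeneous l m (\<lambda>ks. const (esym m ks))"
proof -
  let ?ind = "\<lambda>S. map (\<lambda>k. if k \<in> S then 1 else 0) [0..<l]"
  show ?thesis
  proof (rule homogeneousI[where I="{S. S \<subseteq> {..<l} \<and> card S = m}" and ex="?ind" and a="\<lambda>_. 1"])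
    show "?ind ` {S. S \<subseteq> {..<l} \<and> card S = m} \<subseteq> wcomps l m"
      by (auto simp: wcomps_def sum_list_sum_nth atLeast0LessThan sum.If_cases Int_absorb1)
    fix ks :: "complex list" assume l: "length ks = l"
    have "monom_at ks (?ind S) = (\<Prod>s\<in>S. ks ! s)" if "S \<subseteq> {..<l}" for S
    proof -
      have "monom_at ks (?ind S) = (\<Prod>k<l. if k \<in> S then ks ! k else 1)"
        unfolding monom_at_def l by (intro prod.cong) auto
      also have "\<dots> = (\<Prod>s\<in>S. ks ! s)" using that by (simp add: prod.If_cases Int_absorb1)
      finally show ?thesis .
    qed
    then show "const (esym m ks) = (\<Sum>S\<in>{S. S \<subseteq> {..<l} \<and> card S = m}. const (monom_at ks (?ind S)) * 1)"
      unfolding esym_def l const_sum by (auto intro!: sum.cong)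
  qed simp
qed

lemma homogeneous_ebeta: "homogeneous l (weight \<beta>) (\<lambda>ks. const (ebeta \<beta> ks))"
proof -
  have "homogeneous l (\<Sum>j<length \<beta>. (j + 1) * \<beta> ! j) (\<lambda>ks. \<Prod>j<length \<beta>. const (esym (j + 1) ks) ^ \<beta> ! j)"
  proof (rule homogeneous_prod)
    show "homogeneous l ((j + 1) * \<beta> ! j) (\<lambda>ks. const (esym (j + 1) ks) ^ \<beta> ! j)" for j
      by (rule homogeneous_power[OF homogeneous_esym])
  qed simp
  then show ?thesis unfolding weight_def ebeta_def const_prod const_power .
qed

lemma homogeneous_permute_transpose:
  assumes "homogeneous l n f" "i < l" "j < l"
  shows "homogeneous l n (\<lambda>ks. f (permute_list (transpose i j) ks))"
proof -
  obtain c where c: "\<forall>ks. length ks = l \<longrightarrow> f ks = poly_eval c (wcomps l n) ks"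
    using assms unfolding homogeneous_def by blast
  show ?thesis
  proof (rule homogeneousI[where I="wcomps l n" and ex="permute_list (transpose i j)" and a=c])
    show "permute_list (transpose i j) ` wcomps l n \<subseteq> wcomps l n"
      using assms(2,3) by (auto simp: wcomps_def sum_list_permute_transpose)
  qed (use c assms(2,3) finite_wcomps in \<open>auto simp: poly_eval_def wcomps_def monom_at_permute_transpose
      intro!: sum.cong\<close>)
qed

definition symmetric :: "nat \<Rightarrow> (complex list \<Rightarrow> poly_A) \<Rightarrow> bool" where
  "symmetric l f \<longleftrightarrow> (\<forall>ks i j. length ks = l \<longrightarrow> i < l \<longrightarrow> j < l \<longrightarrow>
      f (permute_list (transpose i j) ks) = f ks)"

lemma permute_list_transpose_involutory:
  "i < length xs \<Longrightarrow> j < length xs \<Longrightarrow>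
    permute_list (transpose i j) (permute_list (transpose i j) xs) = xs"
  by (metis permute_list_compose permute_list_id transpose_comp_involutory transpose_permutes_lessThan)

lemma permute_list_transpose_snoc:
  "i < length xs \<Longrightarrow> j < length xs \<Longrightarrow>
    permute_list (transpose i j) (xs @ [z]) = permute_list (transpose i j) xs @ [z]"
  by (rule nth_equalityI) (auto simp: permute_list_def nth_append transpose_def)

lemma symmetric_poly_eval:
  assumes "\<And>es i j. es \<in> F \<Longrightarrow> i < l \<Longrightarrow> j < l \<Longrightarrow>
      permute_list (transpose i j) es \<in> F \<and> c (permute_list (transpose i j) es) = c es"
    and "\<forall>es\<in>F. length es = l"
  shows "symmetric l (poly_eval c F)"
  unfolding symmetric_def
proof (intro allI impI)
  fix ks :: "complex list" and i j assume a: "length ks = l" "i < l" "j < l"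
  let ?\<pi> = "permute_list (transpose i j)"
  have "poly_eval c F (?\<pi> ks) = (\<Sum>es\<in>F. const (monom_at ks (?\<pi> es)) * c (?\<pi> es))"
    unfolding poly_eval_def using assms a by (auto simp: monom_at_permute_transpose intro!: sum.cong)
  also have "\<dots> = poly_eval c F ks" unfolding poly_eval_def
    by (rule sum.reindex_bij_witness[where i="?\<pi>" and j="?\<pi>"])
       (use assms a in \<open>auto simp: permute_list_transpose_involutory\<close>)
  finally show "poly_eval c F (?\<pi> ks) = poly_eval c F ks" .
qed

lemma symmetric_restrict_last_0:
  assumes "symmetric (Suc l) f"
  shows "symmetric l (\<lambda>ks. f (ks @ [0]))"
  using assms unfolding symmetric_def
  by (metis length_append_singleton less_SucI permute_list_transpose_snoc)

lemma symmetric_update_0: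
  assumes "symmetric (Suc l) h" "\<forall>ks. length ks = l \<longrightarrow> h (ks @ [0]) = 0"
    and "length ks = Suc l" "j < Suc l"
  shows "h (ks[j := 0]) = 0"
proof -
  let ?ks = "permute_list (transpose j l) (ks[j := 0])"
  have len: "length ?ks = Suc l" using assms(3) by simp
  have "?ks ! l = 0" using assms(3,4) by (simp add: permute_list_def nth_append)
  then have "?ks = butlast ?ks @ [0]"
    using len by (metis append_butlast_last_id diff_Suc_1 last_conv_nth list.size(3) nat.distinct(1))
  then have "h ?ks = 0" using assms(2) len by (metis length_butlast diff_Suc_1)
  moreover have "h ?ks = h (ks[j := 0])" using assms(1,3,4) unfolding symmetric_def by simp
  ultimately show ?thesis by simp
qed

text \<open>In l variables, e_l is the monomial k_1 \<cdots> k_l, so multiplying by it shifts exponent vectors.\<close>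

lemma homogeneous_esym_length_cancel:
  assumes "homogeneous l m q" "\<forall>ks. length ks = l \<longrightarrow> const (esym l ks) * q ks = 0"
    and "length ks = l"
  shows "q ks = 0"
proof -
  obtain c where c: "\<forall>ks. length ks = l \<longrightarrow> q ks = poly_eval c (wcomps l m) ks"
    using assms(1) unfolding homogeneous_def by blast
  define c' where "c' es = c (map (\<lambda>a. a - 1) es)" for es
  have inj: "inj_on (map Suc) (wcomps l m)" by (auto simp: inj_on_def)
  have "poly_eval c' (map Suc ` wcomps l m) ks = const (esym l ks) * q ks" if "length ks = l" for ks
  proof -
    have "poly_eval c' (map Suc ` wcomps l m) ks = (\<Sum>es\<in>wcomps l m. const (monom_at ks (map Suc es)) * c es)"
      unfolding poly_eval_def using inj by (simp add: sum.reindex c'_def comp_def)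
    also have "\<dots> = const (esym l ks) * q ks"
      using c that by (auto simp: poly_eval_def sum_distrib_left monom_at_map_Suc wcomps_def
          const_mult mult.assoc intro!: sum.cong)
    finally show ?thesis .
  qed
  then have "c' (map Suc es) = 0" if "es \<in> wcomps l m" for es
    by (intro poly_eval_eq_0_imp_coeff_eq_0[where F="map Suc ` wcomps l m" and l=l])
       (use assms(2) that finite_wcomps in \<open>auto simp: wcomps_def\<close>)
  then have "c es = 0" if "es \<in> wcomps l m" for es using that by (simp add: c'_def comp_def)
  then show ?thesis using c assms(3) by (simp add: poly_eval_def)
qed

text \<open>By symmetry such a function vanishes whenever some k_j = 0, which kills every coefficient
  whose exponent vector has a zero entry.\<close>

lemma symmetric_vanishing_at_0_positive_support:
  assumes "homogeneous (Suc l) n h" "symmetric (Suc l) h" "\<forall>ks. length ks = l \<longrightarrow> h (ks @ [0]) = 0"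
  obtains c where "\<And>ks. length ks = Suc l \<Longrightarrow>
    h ks = poly_eval c {es \<in> wcomps (Suc l) n. \<forall>a\<in>set es. a \<noteq> 0} ks"
proof -
  obtain c where c: "\<forall>ks. length ks = Suc l \<longrightarrow> h ks = poly_eval c (wcomps (Suc l) n) ks"
    using assms(1) unfolding homogeneous_def by blast
  have c_zero: "c es = 0" if es: "es \<in> wcomps (Suc l) n" "j < Suc l" "es ! j = 0" for es j
  proof -
    let ?J = "{es\<in>wcomps (Suc l) n. es ! j = 0}"
    have "poly_eval c ?J ks = 0" if len: "length ks = Suc l" for ks
    proof -
      have "poly_eval c (wcomps (Suc l) n) (ks[j := 0])
          = (\<Sum>es\<in>wcomps (Suc l) n. if es ! j = 0 then const (monom_at ks es) * c es else 0)"
        unfolding poly_eval_def using len es(2)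
        by (intro sum.cong refl) (auto simp: monom_at_update_0 wcomps_def)
      also have "\<dots> = poly_eval c ?J ks"
        unfolding poly_eval_def using finite_wcomps by (simp add: sum.inter_filter)
      finally show ?thesis using c len symmetric_update_0[OF assms(2,3) len es(2)] by simp
    qed
    moreover have "finite ?J" by (rule finite_subset[OF _ finite_wcomps]) auto
    ultimately show ?thesis
      by (intro poly_eval_eq_0_imp_coeff_eq_0[where F="?J" and l="Suc l"]) (use es in \<open>auto simp: wcomps_def\<close>)
  qed
  let ?Pos = "{es\<in>wcomps (Suc l) n. \<forall>a\<in>set es. a \<noteq> 0}"
  have h_Pos: "h ks = poly_eval c ?Pos ks" if "length ks = Suc l" for ks
  proof -
    have "h ks = poly_eval c (wcomps (Suc l) n) ks" using c that by simp
    also have "\<dots> = poly_eval c ?Pos ks" unfolding poly_eval_def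
    proof (rule sum.mono_neutral_right[OF finite_wcomps])
      show "\<forall>es\<in>wcomps (Suc l) n - ?Pos. const (monom_at ks es) * c es = 0"
      proof
        fix es assume "es \<in> wcomps (Suc l) n - ?Pos"
        then obtain j where "es \<in> wcomps (Suc l) n" "j < Suc l" "es ! j = 0"
          by (auto simp: in_set_conv_nth wcomps_def)
        then show "const (monom_at ks es) * c es = 0" using c_zero by simp
      qed
    qed auto
    finally show ?thesis .
  qed
  show thesis using h_Pos by (rule that)
qed

lemma homogeneous_esym_length_factor:
  assumes "homogeneous (Suc l) n h" "symmetric (Suc l) h" "\<forall>ks. length ks = l \<longrightarrow> h (ks @ [0]) = 0"
  obtains h' where "homogeneous (Suc l) (n - Suc l) h'"
    "\<And>ks. length ks = Suc l \<Longrightarrow> h ks = const (esym (Suc l) ks) * h' ks"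
    "\<And>ks. n < Suc l \<Longrightarrow> length ks = Suc l \<Longrightarrow> h ks = 0"
proof -
  let ?Pos = "{es\<in>wcomps (Suc l) n. \<forall>a\<in>set es. a \<noteq> 0}"
  obtain c where h_Pos: "\<And>ks. length ks = Suc l \<Longrightarrow> h ks = poly_eval c ?Pos ks"
    using symmetric_vanishing_at_0_positive_support[OF assms] by blast
  show thesis
  proof (cases "Suc l \<le> n")
    case True
    define h' where "h' = poly_eval (\<lambda>es. c (map Suc es)) (wcomps (Suc l) (n - Suc l))"
    have inj: "inj_on (map Suc) (wcomps (Suc l) (n - Suc l))" by (auto simp: inj_on_def)
    have h_eq: "h ks = const (esym (Suc l) ks) * h' ks" if len: "length ks = Suc l" for ks
    proof -
      have "h ks = poly_eval c (map Suc ` wcomps (Suc l) (n - Suc l)) ks"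
        using h_Pos[OF len] image_map_Suc_wcomps[OF True] by simp
      also have "\<dots> = (\<Sum>es\<in>wcomps (Suc l) (n - Suc l). const (monom_at ks (map Suc es)) * c (map Suc es))"
        unfolding poly_eval_def using inj by (simp add: sum.reindex)
      also have "\<dots> = const (esym (Suc l) ks) * h' ks"
        unfolding h'_def poly_eval_def sum_distrib_left using len
        by (intro sum.cong refl) (auto simp: wcomps_def monom_at_map_Suc const_mult mult.assoc)
      finally show ?thesis .
    qed
    have "homogeneous (Suc l) (n - Suc l) h'"
      unfolding h'_def by (rule homogeneous_poly_eval) simp
    from that[OF this h_eq] True show thesis by simp
  next
    case False
    have Pos_empty: "?Pos = {}"
    proof safe
      fix es assume "es \<in> wcomps (Suc l) n" "\<forall>a\<in>set es. a \<noteq> 0"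
      then show "es \<in> {}" using False length_le_sum_list[of es] by (simp add: wcomps_def)
    qed
    have h_0: "h ks = 0" if "length ks = Suc l" for ks
      using h_Pos[OF that] unfolding Pos_empty by (simp add: poly_eval_def)
    show thesis by (rule that[OF homogeneous_0]) (simp_all add: h_0)
  qed
qed

lemma symmetric_esym_length_cancel:
  assumes "homogeneous (Suc l) m h'" "symmetric (Suc l) h"
    and "\<And>ks. length ks = Suc l \<Longrightarrow> h ks = const (esym (Suc l) ks) * h' ks"
  shows "symmetric (Suc l) h'"
  unfolding symmetric_def
proof (intro allI impI)
  fix ks :: "complex list" and i j assume a: "length ks = Suc l" "i < Suc l" "j < Suc l"
  let ?\<pi> = "permute_list (transpose i j)"
  have "(\<lambda>ks. h' (?\<pi> ks) - h' ks) ks = 0"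
  proof (rule homogeneous_esym_length_cancel)
    show "homogeneous (Suc l) m (\<lambda>ks. h' (?\<pi> ks) - h' ks)"
      by (rule homogeneous_diff[OF homogeneous_permute_transpose[OF assms(1) a(2,3)] assms(1)])
    show "\<forall>ks. length ks = Suc l \<longrightarrow> const (esym (Suc l) ks) * (h' (?\<pi> ks) - h' ks) = 0"
    proof (intro allI impI)
      fix ks :: "complex list" assume l: "length ks = Suc l"
      have "const (esym (Suc l) ks) * (h' (?\<pi> ks) - h' ks) = h (?\<pi> ks) - h ks"
        using l a esym_permute_transpose[of i ks j] assms(3)[of ks] assms(3)[of "?\<pi> ks"]
        by (simp add: right_diff_distrib)
      also have "\<dots> = 0" using assms(2) l a unfolding symmetric_def by simp
      finally show "const (esym (Suc l) ks) * (h' (?\<pi> ks) - h' ks) = 0" .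
    qed
  qed (use a in simp)
  then show "h' (?\<pi> ks) = h' ks" by simp
qed

lemma homogeneous_restrict_last_0:
  assumes "homogeneous (Suc l) n f"
  shows "homogeneous l n (\<lambda>ks. f (ks @ [0]))"
proof -
  obtain c where c: "\<forall>ks. length ks = Suc l \<longrightarrow> f ks = poly_eval c (wcomps (Suc l) n) ks"
    using assms unfolding homogeneous_def by blast
  have "f (ks @ [0]) = poly_eval (\<lambda>es. c (es @ [0])) (wcomps l n) ks" if len: "length ks = l" for ks
  proof -
    have "f (ks @ [0]) = (\<Sum>es\<in>wcomps (Suc l) n. const (monom_at (ks @ [0]) es) * c es)"
      using c len by (simp add: poly_eval_def)
    also have "\<dots> = (\<Sum>es\<in>(\<lambda>es. es @ [0]) ` wcomps l n. const (monom_at (ks @ [0]) es) * c es)"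
    proof (rule sum.mono_neutral_right[OF finite_wcomps])
      show "(\<lambda>es. es @ [0]) ` wcomps l n \<subseteq> wcomps (Suc l) n" by (auto simp: wcomps_def)
      show "\<forall>es\<in>wcomps (Suc l) n - (\<lambda>es. es @ [0]) ` wcomps l n. const (monom_at (ks @ [0]) es) * c es = 0"
      proof
        fix es assume es: "es \<in> wcomps (Suc l) n - (\<lambda>es. es @ [0]) ` wcomps l n"
        then obtain xs a where xa: "es = xs @ [a]" and lxs: "length xs = l"
          by (cases es rule: rev_exhaust) (auto simp: wcomps_def)
        then have "a \<noteq> 0" using es by (auto simp: wcomps_def image_iff)
        then show "const (monom_at (ks @ [0]) es) * c es = 0"
          using lxs len by (simp add: xa monom_at_snoc zero_power)
      qed
    qed
    also have "\<dots> = poly_eval (\<lambda>es. c (es @ [0])) (wcomps l n) ks"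
      unfolding poly_eval_def
      by (subst sum.reindex) (auto simp: inj_on_def wcomps_def monom_at_snoc len intro!: sum.cong)
    finally show ?thesis .
  qed
  then show ?thesis unfolding homogeneous_def by blast
qed

section \<open>The fundamental theorem on symmetric polynomials\<close>

lemma homogeneous_ebeta_sum:
  assumes "finite I" "\<And>i. i \<in> I \<Longrightarrow> weight (b i) = n"
  shows "homogeneous l n (\<lambda>ks. \<Sum>i\<in>I. const (ebeta (b i) ks) * C i)"
proof (rule homogeneous_sum[OF assms(1)])
  fix i assume "i \<in> I"
  then show "homogeneous l n (\<lambda>ks. const (ebeta (b i) ks) * C i)"
    using homogeneous_mult_right[OF homogeneous_ebeta[of l "b i"]] assms(2) by simp
qed

lemma symmetric_ebeta_sum: "symmetric l (\<lambda>ks. \<Sum>i\<in>I. const (ebeta (b i) ks) * C i)"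
  unfolding symmetric_def by (simp add: ebeta_permute_transpose)

lemma ebeta_expansion_Suc:
  assumes "\<forall>ks. length ks = Suc l \<longrightarrow> q ks = (\<Sum>\<beta>\<in>wparts n l. const (ebeta (\<beta> @ [0]) ks) * Clast \<beta>)"
    and "\<forall>ks. length ks = Suc l \<longrightarrow> h ks = (if Suc l \<le> n
      then (\<Sum>\<gamma>\<in>wparts (n - Suc l) (Suc l). const (ebeta (incr_last \<gamma>) ks) * Cincr \<gamma>) else 0)"
  shows "\<exists>C. \<forall>ks. length ks = Suc l \<longrightarrow> q ks + h ks = (\<Sum>\<beta>\<in>wparts n (Suc l). const (ebeta \<beta> ks) * C \<beta>)"
proof -
  define C where "C \<beta> = (if last \<beta> = 0 then Clast (butlast \<beta>) else Cincr (butlast \<beta> @ [last \<beta> - 1]))" for \<beta>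
  let ?W' = "wparts (n - Suc l) (Suc l)"
  have C_last: "C (\<beta> @ [0]) = Clast \<beta>" for \<beta> by (simp add: C_def)
  have "C (incr_last \<gamma>) = Cincr \<gamma>" if "\<gamma> \<in> ?W'" for \<gamma>
  proof -
    have "\<gamma> \<noteq> []" using that by (auto simp: wparts_def)
    then show ?thesis by (simp add: C_def incr_last_def)
  qed
  then have sum_incr: "(\<Sum>\<gamma>\<in>?W'. const (ebeta (incr_last \<gamma>) ks) * Cincr \<gamma>)
      = (\<Sum>\<gamma>\<in>?W'. const (ebeta (incr_last \<gamma>) ks) * C (incr_last \<gamma>))" for ks
    by (intro sum.cong) simp_all
  have "q ks + h ks = (\<Sum>\<beta>\<in>wparts n (Suc l). const (ebeta \<beta> ks) * C \<beta>)" if len: "length ks = Suc l" for ks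
  proof -
    have "q ks = (\<Sum>\<beta>\<in>wparts n l. const (ebeta (\<beta> @ [0]) ks) * C (\<beta> @ [0]))"
      using assms(1) len by (simp add: C_last)
    moreover have "h ks = (if Suc l \<le> n
        then (\<Sum>\<gamma>\<in>?W'. const (ebeta (incr_last \<gamma>) ks) * C (incr_last \<gamma>)) else 0)"
      using assms(2) len by (simp add: sum_incr)
    ultimately show ?thesis by (simp only: sum_wparts_Suc[of _ n l])
  qed
  then show ?thesis by blast
qed

text \<open>Induction on l and then on n: subtract the symmetric lift of the expansion of f(k_1, \<dots>, k_(l-1), 0);
  the rest vanishes at k_l = 0, hence is e_l times a symmetric function of lower degree.\<close>

theorem symmetric_homogeneous_ebeta_expansion:
  assumes "homogeneous l n f" "symmetric l f"
  shows "\<exists>C. \<forall>ks. length ks = l \<longrightarrow> f ks = (\<Sum>\<beta>\<in>wparts n l. const (ebeta \<beta> ks) * C \<beta>)"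
  using assms
proof (induction l arbitrary: n f)
  case 0
  obtain c where "\<forall>ks. length ks = 0 \<longrightarrow> f ks = poly_eval c (wcomps 0 n) ks"
    using "0.prems"(1) unfolding homogeneous_def by blast
  moreover have "wparts n 0 = (if n = 0 then {[]} else {})" "wcomps 0 n = (if n = 0 then {[]} else {})"
    by (auto simp: wparts_def weight_def wcomps_def)
  ultimately show ?case by (intro exI[of _ "\<lambda>_. f []"]) (auto simp: ebeta_def poly_eval_def)
next
  case (Suc l)
  from Suc.prems show ?case
  proof (induction n arbitrary: f rule: less_induct)
    case (less n)
    obtain Clast where Clast: "\<forall>ks. length ks = l \<longrightarrow> f (ks @ [0]) = (\<Sum>\<beta>\<in>wparts n l. const (ebeta \<beta> ks) * Clast \<beta>)"
      using Suc.IH[OF homogeneous_restrict_last_0[OF less.prems(1)] symmetric_restrict_last_0[OF less.prems(2)]]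
      by blast
    define q where "q ks = (\<Sum>\<beta>\<in>wparts n l. const (ebeta (\<beta> @ [0]) ks) * Clast \<beta>)" for ks
    have hom_q: "homogeneous (Suc l) n q"
      unfolding q_def by (rule homogeneous_ebeta_sum[OF finite_wparts]) (simp add: wparts_def weight_snoc)
    have sym_q: "symmetric (Suc l) q"
      unfolding q_def by (rule symmetric_ebeta_sum)
    define h where "h ks = f ks - q ks" for ks
    have hom_h: "homogeneous (Suc l) n h"
      unfolding h_def by (rule homogeneous_diff[OF less.prems(1) hom_q])
    have sym_h: "symmetric (Suc l) h"
      using less.prems(2) sym_q unfolding symmetric_def h_def by simp
    have h_last_0: "\<forall>ks. length ks = l \<longrightarrow> h (ks @ [0]) = 0"
      using Clast by (simp add: h_def q_def ebeta_snoc ebeta_ks_snoc_0)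
    obtain h' where hom_h': "homogeneous (Suc l) (n - Suc l) h'"
      and h_eq: "\<And>ks. length ks = Suc l \<Longrightarrow> h ks = const (esym (Suc l) ks) * h' ks"
      and h_small: "\<And>ks. n < Suc l \<Longrightarrow> length ks = Suc l \<Longrightarrow> h ks = 0"
      using homogeneous_esym_length_factor[OF hom_h sym_h h_last_0] by blast
    have sym_h': "symmetric (Suc l) h'"
      by (rule symmetric_esym_length_cancel[OF hom_h' sym_h h_eq])
    obtain Cincr where h_expansion: "\<forall>ks. length ks = Suc l \<longrightarrow> h ks = (if Suc l \<le> n
        then (\<Sum>\<gamma>\<in>wparts (n - Suc l) (Suc l). const (ebeta (incr_last \<gamma>) ks) * Cincr \<gamma>) else 0)"
    proof (cases "Suc l \<le> n")
      case True
      then have "n - Suc l < n" by simp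
      then obtain Cincr where Cincr: "\<forall>ks. length ks = Suc l \<longrightarrow>
          h' ks = (\<Sum>\<gamma>\<in>wparts (n - Suc l) (Suc l). const (ebeta \<gamma> ks) * Cincr \<gamma>)"
        using less.IH[OF _ hom_h' sym_h'] by blast
      have "h ks = (\<Sum>\<gamma>\<in>wparts (n - Suc l) (Suc l). const (ebeta (incr_last \<gamma>) ks) * Cincr \<gamma>)"
        if "length ks = Suc l" for ks
        using h_eq Cincr that by (simp add: esym_mult_ebeta_expansion)
      then show ?thesis using True by (intro that[of Cincr]) simp
    next
      case False
      then show ?thesis using h_small by (intro that[of "\<lambda>_. 0"]) simp
    qed
    have q_eq: "\<forall>ks. length ks = Suc l \<longrightarrow> q ks = (\<Sum>\<beta>\<in>wparts n l. const (ebeta (\<beta> @ [0]) ks) * Clast \<beta>)"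
      by (simp add: q_def)
    have q_plus_h: "q ks + h ks = f ks" for ks by (simp add: h_def)
    show ?case using ebeta_expansion_Suc[OF q_eq h_expansion] unfolding q_plus_h .
  qed
qed

section \<open>Linear independence of the e^\<beta>\<close>

theorem ebeta_linear_independent:
  assumes "\<forall>ks. length ks = l \<longrightarrow> (\<Sum>\<beta>\<in>wparts n l. const (ebeta \<beta> ks) * D \<beta>) = 0" "\<beta> \<in> wparts n l"
  shows "D \<beta> = 0"
  using assms
proof (induction l arbitrary: n D \<beta>)
  case 0
  then have "\<beta> = []" "wparts n 0 = {[]}" by (auto simp: wparts_def weight_def)
  then show ?case using "0.prems"(1) by (auto simp: ebeta_def)
next
  case (Suc l)
  from Suc.prems show ?case
  proof (induction n arbitrary: D \<beta> rule: less_induct)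
    case (less n)
    let ?W' = "wparts (n - Suc l) (Suc l)"
    have split: "(\<Sum>\<beta>\<in>wparts n (Suc l). const (ebeta \<beta> ks) * D \<beta>) =
       (\<Sum>\<beta>\<in>wparts n l. const (ebeta (\<beta> @ [0]) ks) * D (\<beta> @ [0])) +
       (if Suc l \<le> n then (\<Sum>\<gamma>\<in>?W'. const (ebeta (incr_last \<gamma>) ks) * D (incr_last \<gamma>)) else 0)" for ks
      by (rule sum_wparts_Suc)
    have ebeta_incr_last_0: "ebeta (incr_last \<gamma>) (ks @ [0]) = 0" if "\<gamma> \<in> ?W'" "length ks = l" for \<gamma> ks
    proof -
      have "\<gamma> \<noteq> []" "length \<gamma> = Suc l" using that(1) by (auto simp: wparts_def)
      then show ?thesis using that(2) by (simp add: ebeta_incr_last esym_snoc_0 esym_eq_0_if_gt)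
    qed
    have D_last_0: "D (\<beta> @ [0]) = 0" if "\<beta> \<in> wparts n l" for \<beta>
    proof (rule Suc.IH[OF _ that, of "\<lambda>\<beta>. D (\<beta> @ [0])"], intro allI impI)
      fix ks :: "complex list" assume len: "length ks = l"
      have "(\<Sum>\<beta>\<in>wparts n (Suc l). const (ebeta \<beta> (ks @ [0])) * D \<beta>) = 0"
        using less.prems(1) len by simp
      moreover have "(\<Sum>\<gamma>\<in>?W'. const (ebeta (incr_last \<gamma>) (ks @ [0])) * D (incr_last \<gamma>)) = 0"
        using ebeta_incr_last_0 len by simp
      ultimately show "(\<Sum>\<beta>\<in>wparts n l. const (ebeta \<beta> ks) * D (\<beta> @ [0])) = 0"
        using split[of "ks @ [0]"] by (simp add: ebeta_snoc ebeta_ks_snoc_0 split: if_splits)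
    qed
    have D_incr_last: "D (incr_last \<gamma>) = 0" if le: "Suc l \<le> n" and \<gamma>: "\<gamma> \<in> ?W'" for \<gamma>
    proof -
      define R where "R ks = (\<Sum>\<gamma>\<in>?W'. const (ebeta \<gamma> ks) * D (incr_last \<gamma>))" for ks
      have hom_R: "homogeneous (Suc l) (n - Suc l) R"
        unfolding R_def by (rule homogeneous_ebeta_sum[OF finite_wparts]) (simp add: wparts_def)
      have "const (esym (Suc l) ks) * R ks = 0" if len: "length ks = Suc l" for ks
        using less.prems(1) len split[of ks] D_last_0 le
        by (simp add: R_def esym_mult_ebeta_expansion)
      then have "\<forall>ks. length ks = Suc l \<longrightarrow> R ks = 0"
        using homogeneous_esym_length_cancel[OF hom_R] by blast
      moreover have "n - Suc l < n" using le by simp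
      ultimately show ?thesis
        using less.IH[of "n - Suc l" "\<lambda>\<gamma>. D (incr_last \<gamma>)" \<gamma>] \<gamma> unfolding R_def by blast
    qed
    from less.prems(2) consider (last_0) \<beta>' where "\<beta>' \<in> wparts n l" "\<beta> = \<beta>' @ [0]"
      | (incr_last) \<gamma> where "Suc l \<le> n" "\<gamma> \<in> ?W'" "\<beta> = incr_last \<gamma>"
      unfolding wparts_Suc_eq[of n l] by (auto split: if_splits)
    then show ?case using D_last_0 D_incr_last by cases auto
  qed
qed

corollary ebeta_linear_independent_subset:
  assumes "S \<subseteq> wparts n l" "\<forall>ks. length ks = l \<longrightarrow> (\<Sum>\<beta>\<in>S. const (ebeta \<beta> ks) * D \<beta>) = 0" "\<beta> \<in> S"
  shows "D \<beta> = 0"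
proof -
  define D' where "D' \<beta> = (if \<beta> \<in> S then D \<beta> else 0)" for \<beta>
  have "(\<Sum>\<beta>\<in>wparts n l. const (ebeta \<beta> ks) * D' \<beta>) = (\<Sum>\<beta>\<in>S. const (ebeta \<beta> ks) * D \<beta>)" for ks
    by (rule sum.mono_neutral_cong_right) (use assms(1) finite_wparts in \<open>auto simp: D'_def\<close>)
  then have "D' \<beta> = 0" using ebeta_linear_independent[where l=l and n=n and D=D' and \<beta>=\<beta>] assms by auto
  then show ?thesis using assms(3) by (simp add: D'_def)
qed

definition comps :: "nat \<Rightarrow> nat \<Rightarrow> nat list set" where
  "comps l n = {es. length es = l \<and> (\<forall>a\<in>set es. a \<ge> 1) \<and> sum_list es = n}"

definition X_prod :: "nat \<Rightarrow> nat list \<Rightarrow> poly_A" where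
  "X_prod l es = (\<Prod>j<l. X (es ! j))"

lemma gen_lhs_eq: "gen_lhs n ks = (\<Sum>es\<in>comps (length ks) n. const (monom_at ks es) * X_prod (length ks) es)"
  unfolding gen_lhs_def comps_def monom_at_def X_prod_def by simp

lemma comps_eq: "comps l n = {es \<in> wcomps l n. \<forall>a\<in>set es. a \<noteq> 0}"
  unfolding comps_def wcomps_def by auto

lemma finite_comps: "finite (comps l n)"
  unfolding comps_eq using finite_wcomps by simp

lemma comps_eq_empty: "n < l \<Longrightarrow> comps l n = {}"
  using length_le_sum_list by (fastforce simp: comps_eq wcomps_def)

text \<open>Every exponent in gen_lhs is positive, so e_l = k_1 \<cdots> k_l factors out.\<close>

lemma gen_lhs_eq_esym_mult:
  assumes "l \<le> n" "length ks = l"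
  shows "gen_lhs n ks = const (esym l ks) * poly_eval (\<lambda>es. X_prod l (map Suc es)) (wcomps l (n - l)) ks"
proof -
  have "comps l n = map Suc ` wcomps l (n - l)"
    using image_map_Suc_wcomps[OF assms(1)] by (simp add: comps_eq)
  moreover have "inj_on (map Suc) (wcomps l (n - l))" by (auto simp: inj_on_def)
  ultimately have "gen_lhs n ks = (\<Sum>es\<in>wcomps l (n - l). const (monom_at ks (map Suc es)) * X_prod l (map Suc es))"
    using assms(2) by (simp add: gen_lhs_eq sum.reindex)
  also have "\<dots> = const (esym l ks) * poly_eval (\<lambda>es. X_prod l (map Suc es)) (wcomps l (n - l)) ks"
    unfolding poly_eval_def sum_distrib_left using assms(2)
    by (intro sum.cong refl) (auto simp: wcomps_def monom_at_map_Suc const_mult mult.assoc)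
  finally show ?thesis .
qed

lemma symmetric_X_prod_map_Suc: "symmetric l (poly_eval (\<lambda>es. X_prod l (map Suc es)) (wcomps l m))"
proof (rule symmetric_poly_eval)
  fix es i j assume a: "es \<in> wcomps l m" "i < l" "j < l"
  let ?\<tau> = "transpose i j"
  show "permute_list ?\<tau> es \<in> wcomps l m \<and>
      X_prod l (map Suc (permute_list ?\<tau> es)) = X_prod l (map Suc es)"
  proof
    show "permute_list ?\<tau> es \<in> wcomps l m"
      using a by (auto simp: wcomps_def sum_list_permute_transpose)
    have "X_prod l (map Suc (permute_list ?\<tau> es)) = (\<Prod>k<l. X (Suc (es ! ?\<tau> k)))"
      unfolding X_prod_def using a by (auto simp: wcomps_def permute_list_def intro!: prod.cong)
    also have "\<dots> = (\<Prod>k<l. X (Suc (es ! k)))"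
      using prod.permute[OF transpose_permutes_lessThan[OF a(2,3)], of "\<lambda>k. X (Suc (es ! k))"]
      by (simp add: comp_def)
    also have "\<dots> = X_prod l (map Suc es)"
      unfolding X_prod_def using a by (auto simp: wcomps_def intro!: prod.cong)
    finally show "X_prod l (map Suc (permute_list ?\<tau> es)) = X_prod l (map Suc es)" .
  qed
qed (auto simp: wcomps_def)

lemma gen_lhs_ebeta_expansion:
  assumes "1 \<le> l"
  shows "\<exists>G. (\<forall>\<beta>. \<beta> \<notin> Bset n l \<longrightarrow> G \<beta> = 0) \<and>
      (\<forall>ks. length ks = l \<longrightarrow> gen_lhs n ks = (\<Sum>\<beta>\<in>Bset n l. const (ebeta \<beta> ks) * G \<beta>))"
proof -
  obtain m where m: "l = Suc m" using assms by (cases l) auto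
  show ?thesis
  proof (cases "l \<le> n")
    case False
    then have "Bset n l = {}" "\<And>ks. length ks = l \<Longrightarrow> gen_lhs n ks = 0"
      by (simp_all add: m Bset_Suc_eq_incr_last gen_lhs_eq comps_eq_empty)
    then show ?thesis by (intro exI[of _ "\<lambda>_. 0"]) auto
  next
    case True
    let ?inner = "poly_eval (\<lambda>es. X_prod l (map Suc es)) (wcomps l (n - l))"
    obtain C where C: "\<forall>ks. length ks = l \<longrightarrow> ?inner ks = (\<Sum>\<gamma>\<in>wparts (n - l) l. const (ebeta \<gamma> ks) * C \<gamma>)"
      using symmetric_homogeneous_ebeta_expansion[OF homogeneous_poly_eval symmetric_X_prod_map_Suc] by blast
    define G where "G \<beta> = (if \<beta> \<in> Bset n l then C (butlast \<beta> @ [last \<beta> - 1]) else 0)" for \<beta>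
    have "gen_lhs n ks = (\<Sum>\<beta>\<in>Bset n l. const (ebeta \<beta> ks) * G \<beta>)" if len: "length ks = l" for ks
    proof -
      have "gen_lhs n ks = (\<Sum>\<gamma>\<in>wparts (n - l) l. const (ebeta (incr_last \<gamma>) ks) * C \<gamma>)"
        using gen_lhs_eq_esym_mult[OF True len] C len m by (simp add: esym_mult_ebeta_expansion)
      also have "\<dots> = (\<Sum>\<gamma>\<in>wparts (n - l) l. const (ebeta (incr_last \<gamma>) ks) * G (incr_last \<gamma>))"
      proof (intro sum.cong refl)
        fix \<gamma> assume \<gamma>: "\<gamma> \<in> wparts (n - l) l"
        then have "\<gamma> \<noteq> []" using m by (auto simp: wparts_def)
        moreover have "incr_last \<gamma> \<in> Bset n l" using \<gamma> True m by (auto simp: Bset_Suc_eq_incr_last)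
        ultimately show "const (ebeta (incr_last \<gamma>) ks) * C \<gamma> = const (ebeta (incr_last \<gamma>) ks) * G (incr_last \<gamma>)"
          by (simp add: G_def incr_last_def)
      qed
      also have "\<dots> = (\<Sum>\<beta>\<in>Bset n l. const (ebeta \<beta> ks) * G \<beta>)"
        using True by (simp add: m sum_Bset_Suc)
      finally show ?thesis .
    qed
    then show ?thesis by (intro exI[of _ G]) (auto simp: G_def)
  qed
qed

lemma gfam_spec:
  assumes "1 \<le> l"
  shows "\<forall>\<beta>. \<beta> \<notin> Bset n l \<longrightarrow> gfam n l \<beta> = 0"
    and "\<forall>ks. length ks = l \<longrightarrow> gen_lhs n ks = (\<Sum>\<beta>\<in>Bset n l. const (ebeta \<beta> ks) * gfam n l \<beta>)"
proof -
  let ?P = "\<lambda>G. (\<forall>\<beta>. \<beta> \<notin> Bset n l \<longrightarrow> G \<beta> = 0) \<and>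
      (\<forall>ks. length ks = l \<longrightarrow> gen_lhs n ks = (\<Sum>\<beta>\<in>Bset n l. const (ebeta \<beta> ks) * G \<beta>))"
  have "\<exists>!G. ?P G"
  proof (rule ex_ex1I)
    show "\<exists>G. ?P G" by (rule gen_lhs_ebeta_expansion[OF assms])
  next
    fix G1 G2 assume G1: "?P G1" and G2: "?P G2"
    have diff: "\<forall>ks. length ks = l \<longrightarrow> (\<Sum>\<beta>\<in>Bset n l. const (ebeta \<beta> ks) * (G1 \<beta> - G2 \<beta>)) = 0"
    proof (intro allI impI)
      fix ks :: "complex list" assume "length ks = l"
      then have "gen_lhs n ks = (\<Sum>\<beta>\<in>Bset n l. const (ebeta \<beta> ks) * G1 \<beta>)"
        and "gen_lhs n ks = (\<Sum>\<beta>\<in>Bset n l. const (ebeta \<beta> ks) * G2 \<beta>)"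
        using G1 G2 by blast+
      then have "(\<Sum>\<beta>\<in>Bset n l. const (ebeta \<beta> ks) * G1 \<beta>) - (\<Sum>\<beta>\<in>Bset n l. const (ebeta \<beta> ks) * G2 \<beta>) = 0"
        by (simp only: diff_self)
      then show "(\<Sum>\<beta>\<in>Bset n l. const (ebeta \<beta> ks) * (G1 \<beta> - G2 \<beta>)) = 0"
        by (simp add: right_diff_distrib sum_subtractf)
    qed
    have "G1 \<beta> = G2 \<beta>" for \<beta>
    proof (cases "\<beta> \<in> Bset n l")
      case True
      then show ?thesis using ebeta_linear_independent_subset[OF Bset_subset_wparts diff True] by simp
    next
      case False
      then have "G1 \<beta> = 0" "G2 \<beta> = 0" using G1 G2 by blast+
      then show ?thesis by simp
    qed
    then show "G1 = G2" by (rule ext)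
  qed
  then have "?P (gfam n l)" unfolding gfam_def by (rule theI')
  then show "\<forall>\<beta>. \<beta> \<notin> Bset n l \<longrightarrow> gfam n l \<beta> = 0"
    and "\<forall>ks. length ks = l \<longrightarrow> gen_lhs n ks = (\<Sum>\<beta>\<in>Bset n l. const (ebeta \<beta> ks) * gfam n l \<beta>)"
    by simp_all
qed

section \<open>The derivation\<close>

lemma is_d_add: "is_d d \<Longrightarrow> d (p + q) = d p + d q"
  unfolding is_d_def by blast

lemma is_d_mult: "is_d d \<Longrightarrow> d (p * q) = p * d q + q * d p"
  unfolding is_d_def by blast

lemma is_d_const_mult: "is_d d \<Longrightarrow> d (const c * p) = const c * d p"
  unfolding is_d_def by blast

lemma is_d_X: "is_d d \<Longrightarrow> 1 \<le> a \<Longrightarrow> d (X a) = (if a = 1 then 0 else X (a - 1))"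
  unfolding is_d_def by auto

lemma is_d_0: "is_d d \<Longrightarrow> d 0 = 0"
  using is_d_add[of d 0 0] by simp

lemma is_d_1: "is_d d \<Longrightarrow> d 1 = 0"
  using is_d_mult[of d 1 1] by simp

lemma is_d_sum: "is_d d \<Longrightarrow> d (\<Sum>x\<in>A. f x) = (\<Sum>x\<in>A. d (f x))"
  by (induction A rule: infinite_finite_induct) (auto simp: is_d_0 is_d_add)

lemma is_d_prod:
  assumes "is_d d" "finite A"
  shows "d (\<Prod>x\<in>A. f x) = (\<Sum>x\<in>A. (\<Prod>y\<in>A - {x}. f y) * d (f x))"
  using assms(2)
proof (induction A rule: finite_induct)
  case empty
  then show ?case by (simp add: is_d_1[OF assms(1)])
next
  case (insert a A)
  have "f a * (\<Prod>y\<in>A - {x}. f y) = (\<Prod>y\<in>insert a A - {x}. f y)" if "x \<in> A" for x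
  proof -
    have "insert a A - {x} = insert a (A - {x})" "a \<notin> A - {x}" using insert that by auto
    then show ?thesis using insert by simp
  qed
  then have "f a * d (\<Prod>x\<in>A. f x) = (\<Sum>x\<in>A. (\<Prod>y\<in>insert a A - {x}. f y) * d (f x))"
    unfolding insert.IH sum_distrib_left by (intro sum.cong refl) (simp add: mult.assoc[symmetric])
  then show ?case using insert by (simp add: is_d_mult[OF assms(1)] add.commute)
qed

lemma X_prod_update:
  assumes "length es = l" "j < l"
  shows "X_prod l (es[j := v]) = X v * (\<Prod>k\<in>{..<l} - {j}. X (es ! k))"
proof -
  have "X_prod l (es[j := v]) = X (es[j := v] ! j) * (\<Prod>k\<in>{..<l} - {j}. X (es[j := v] ! k))"
    unfolding X_prod_def using assms by (simp add: prod.remove)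
  also have "\<dots> = X v * (\<Prod>k\<in>{..<l} - {j}. X (es ! k))"
    using assms by (auto intro!: prod.cong)
  finally show ?thesis .
qed

lemma d_X_prod:
  assumes "is_d d" "es \<in> comps l n"
  shows "d (X_prod l es) = (\<Sum>j<l. if 2 \<le> es ! j then X_prod l (es[j := es ! j - 1]) else 0)"
proof -
  have len: "length es = l" and pos: "\<And>j. j < l \<Longrightarrow> 1 \<le> es ! j"
    using assms(2) by (auto simp: comps_def)
  have "d (X_prod l es) = (\<Sum>j<l. (\<Prod>k\<in>{..<l} - {j}. X (es ! k)) * d (X (es ! j)))"
    unfolding X_prod_def by (rule is_d_prod[OF assms(1)]) simp
  also have "\<dots> = (\<Sum>j<l. if 2 \<le> es ! j then X_prod l (es[j := es ! j - 1]) else 0)"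
  proof (intro sum.cong refl)
    fix j assume "j \<in> {..<l}"
    then show "(\<Prod>k\<in>{..<l} - {j}. X (es ! k)) * d (X (es ! j))
        = (if 2 \<le> es ! j then X_prod l (es[j := es ! j - 1]) else 0)"
      using pos[of j] by (auto simp: is_d_X[OF assms(1)] X_prod_update[OF len] mult.commute)
  qed
  finally show ?thesis .
qed

lemma comps_ge_2_eq_image:
  assumes "1 \<le> n" "j < l"
  shows "{es \<in> comps l n. 2 \<le> es ! j} = (\<lambda>es. es[j := es ! j + 1]) ` comps l (n - 1)"
proof (intro equalityI subsetI)
  fix es assume es: "es \<in> {es \<in> comps l n. 2 \<le> es ! j}"
  define fs where "fs = es[j := es ! j - 1]"
  have len: "length es = l" using es by (simp add: comps_def)
  have "fs[j := fs ! j + 1] = es" using es len assms by (simp add: fs_def)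
  moreover have "fs \<in> comps l (n - 1)"
  proof -
    have "set fs \<subseteq> insert (es ! j - 1) (set es)" unfolding fs_def by (rule set_update_subset_insert)
    then have "\<forall>a\<in>set fs. 1 \<le> a" using es by (auto simp: comps_def)
    moreover have "sum_list fs = n - 1"
      using es len assms unfolding fs_def by (simp add: sum_list_update comps_def)
    ultimately show ?thesis using len by (simp add: comps_def fs_def)
  qed
  ultimately show "es \<in> (\<lambda>es. es[j := es ! j + 1]) ` comps l (n - 1)" by force
next
  fix es assume "es \<in> (\<lambda>es. es[j := es ! j + 1]) ` comps l (n - 1)"
  then obtain fs where fs: "fs \<in> comps l (n - 1)" "es = fs[j := fs ! j + 1]" by blast
  have len: "length fs = l" using fs by (simp add: comps_def)
  have "1 \<le> fs ! j" using fs(1) len assms(2) by (auto simp: comps_def)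
  moreover have "set es \<subseteq> insert (fs ! j + 1) (set fs)" unfolding fs(2) by (rule set_update_subset_insert)
  moreover have "sum_list es = n" using fs len assms by (simp add: sum_list_update comps_def)
  ultimately show "es \<in> {es \<in> comps l n. 2 \<le> es ! j}" using fs len assms by (auto simp: comps_def)
qed

text \<open>The summands of gen_lhs n in which the j-th index is at least 2 are those of gen_lhs (n - 1)
  with that index raised by one, which multiplies the coefficient by k_j.\<close>

lemma sum_comps_lower_index:
  assumes "1 \<le> n" "j < length ks"
  shows "(\<Sum>es\<in>comps (length ks) n. if 2 \<le> es ! j
      then const (monom_at ks es) * X_prod (length ks) (es[j := es ! j - 1]) else 0)
    = const (ks ! j) * gen_lhs (n - 1) ks"
proof -
  let ?l = "length ks" and ?up = "\<lambda>es. es[j := es ! j + 1]"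
  have inj: "inj_on ?up (comps ?l (n - 1))"
  proof (rule inj_onI)
    fix x y assume "x \<in> comps ?l (n - 1)" "y \<in> comps ?l (n - 1)" "?up x = ?up y"
    then have "(?up x)[j := ?up x ! j - 1] = (?up y)[j := ?up y ! j - 1]" by simp
    then show "x = y" using \<open>x \<in> comps ?l (n - 1)\<close> \<open>y \<in> comps ?l (n - 1)\<close> assms(2)
      by (simp add: comps_def)
  qed
  have "(\<Sum>es\<in>comps ?l n. if 2 \<le> es ! j then const (monom_at ks es) * X_prod ?l (es[j := es ! j - 1]) else 0)
      = (\<Sum>es\<in>{es \<in> comps ?l n. 2 \<le> es ! j}. const (monom_at ks es) * X_prod ?l (es[j := es ! j - 1]))"
    by (rule sum.inter_filter[OF finite_comps, symmetric])
  also have "\<dots> = (\<Sum>es\<in>comps ?l (n - 1). const (monom_at ks (?up es)) * X_prod ?l ((?up es)[j := ?up es ! j - 1]))"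
    by (simp only: comps_ge_2_eq_image[OF assms] sum.reindex[OF inj] comp_def)
  also have "\<dots> = (\<Sum>es\<in>comps ?l (n - 1). const (ks ! j) * (const (monom_at ks es) * X_prod ?l es))"
  proof (intro sum.cong refl)
    fix es assume "es \<in> comps ?l (n - 1)"
    then have len: "length es = ?l" by (simp add: comps_def)
    then show "const (monom_at ks (?up es)) * X_prod ?l ((?up es)[j := ?up es ! j - 1])
        = const (ks ! j) * (const (monom_at ks es) * X_prod ?l es)"
      unfolding monom_at_incr[OF len assms(2)] using assms(2) len by (simp add: const_mult mult.assoc)
  qed
  also have "\<dots> = const (ks ! j) * gen_lhs (n - 1) ks"
    unfolding gen_lhs_eq sum_distrib_left ..
  finally show ?thesis .
qed

lemma d_gen_lhs:
  assumes "is_d d" "1 \<le> n"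
  shows "d (gen_lhs n ks) = const (esym 1 ks) * gen_lhs (n - 1) ks"
proof -
  let ?l = "length ks"
  have "d (gen_lhs n ks) = (\<Sum>es\<in>comps ?l n. \<Sum>j<?l.
      if 2 \<le> es ! j then const (monom_at ks es) * X_prod ?l (es[j := es ! j - 1]) else 0)"
    unfolding gen_lhs_eq is_d_sum[OF assms(1)] is_d_const_mult[OF assms(1)]
    by (intro sum.cong refl) (auto simp: d_X_prod[OF assms(1)] sum_distrib_left intro!: sum.cong)
  also have "\<dots> = (\<Sum>j<?l. \<Sum>es\<in>comps ?l n.
      if 2 \<le> es ! j then const (monom_at ks es) * X_prod ?l (es[j := es ! j - 1]) else 0)"
    by (rule sum.swap)
  also have "\<dots> = (\<Sum>j<?l. const (ks ! j) * gen_lhs (n - 1) ks)"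
    using sum_comps_lower_index[OF assms(2)] by simp
  also have "\<dots> = const (esym 1 ks) * gen_lhs (n - 1) ks"
    unfolding esym_1 const_sum sum_distrib_right ..
  finally show ?thesis .
qed

definition incr_first :: "nat list \<Rightarrow> nat list" where
  "incr_first \<beta> = Suc (\<beta> ! 0) # tl \<beta>"

lemma Bset_nonempty: "1 \<le> l \<Longrightarrow> \<beta> \<in> Bset n l \<Longrightarrow> \<beta> \<noteq> []"
  by (auto simp: Bset_eq wparts_def)

lemma incr_first_in_Bset:
  assumes "1 \<le> l" "1 \<le> n" "\<beta> \<in> Bset (n - 1) l"
  shows "incr_first \<beta> \<in> Bset n l"
proof -
  obtain a t where at: "\<beta> = a # t" using Bset_nonempty[OF assms(1,3)] by (cases \<beta>) auto
  have last: "1 \<le> \<beta> ! (l - 1)" using assms(3) by (simp add: Bset_eq)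
  have "1 \<le> (Suc a # t) ! (l - 1)"
  proof (cases "l - 1")
    case (Suc k)
    then show ?thesis using last unfolding at by simp
  qed simp
  then show ?thesis using assms by (auto simp: Bset_eq wparts_def incr_first_def at weight_Cons)
qed

lemma inj_on_incr_first:
  assumes "1 \<le> l"
  shows "inj_on incr_first (Bset m l)"
proof (rule inj_onI)
  fix x y assume "x \<in> Bset m l" "y \<in> Bset m l" "incr_first x = incr_first y"
  moreover have "x \<noteq> []" "y \<noteq> []" using Bset_nonempty[OF assms] calculation(1,2) by auto
  ultimately show "x = y" by (cases x; cases y) (auto simp: incr_first_def)
qed

text \<open>Multiplying by e_1 raises \<beta>_1 by one, a bijection from B^(l)_(n-1) onto the \<beta> \<in> B^(l)_n
  with \<beta>_1 > 0.\<close>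

lemma esym_1_mult_Bset_expansion:
  assumes "1 \<le> l" "1 \<le> n" "\<forall>\<beta>. \<beta> \<notin> Bset (n - 1) l \<longrightarrow> G \<beta> = 0"
  shows "const (esym 1 ks) * (\<Sum>\<beta>\<in>Bset (n - 1) l. const (ebeta \<beta> ks) * G \<beta>)
    = (\<Sum>\<beta>\<in>Bset n l. const (ebeta \<beta> ks) * (if \<beta> ! 0 = 0 then 0 else G ((\<beta> ! 0 - 1) # tl \<beta>)))"
proof -
  define R where "R \<beta> = (if \<beta> ! 0 = 0 then 0 else G ((\<beta> ! 0 - 1) # tl \<beta>))" for \<beta>
  have "const (esym 1 ks) * (\<Sum>\<beta>\<in>Bset (n - 1) l. const (ebeta \<beta> ks) * G \<beta>)
      = (\<Sum>\<beta>\<in>Bset (n - 1) l. const (ebeta (incr_first \<beta>) ks) * R (incr_first \<beta>))"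
    unfolding sum_distrib_left
  proof (intro sum.cong refl)
    fix \<beta> assume "\<beta> \<in> Bset (n - 1) l"
    then obtain a t where "\<beta> = a # t" using Bset_nonempty[OF assms(1)] by (cases \<beta>) auto
    then show "const (esym 1 ks) * (const (ebeta \<beta> ks) * G \<beta>)
        = const (ebeta (incr_first \<beta>) ks) * R (incr_first \<beta>)"
      by (simp add: incr_first_def R_def ebeta_Cons_Suc const_mult mult.assoc)
  qed
  also have "\<dots> = (\<Sum>\<beta>\<in>incr_first ` Bset (n - 1) l. const (ebeta \<beta> ks) * R \<beta>)"
    by (simp only: sum.reindex[OF inj_on_incr_first[OF assms(1)]] comp_def)
  also have "\<dots> = (\<Sum>\<beta>\<in>Bset n l. const (ebeta \<beta> ks) * R \<beta>)"
  proof (rule sum.mono_neutral_left)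
    show "finite (Bset n l)" by (rule finite_subset[OF Bset_subset_wparts finite_wparts])
    show "incr_first ` Bset (n - 1) l \<subseteq> Bset n l" using incr_first_in_Bset[OF assms(1,2)] by blast
    show "\<forall>\<beta>\<in>Bset n l - incr_first ` Bset (n - 1) l. const (ebeta \<beta> ks) * R \<beta> = 0"
    proof
      fix \<beta> assume \<beta>: "\<beta> \<in> Bset n l - incr_first ` Bset (n - 1) l"
      then obtain a t where at: "\<beta> = a # t" using Bset_nonempty[OF assms(1)] by (cases \<beta>) auto
      show "const (ebeta \<beta> ks) * R \<beta> = 0"
      proof (cases a)
        case (Suc c)
        then have "incr_first (c # t) = \<beta>" by (simp add: incr_first_def at)
        then have "c # t \<notin> Bset (n - 1) l" using \<beta> by blast
        then show ?thesis using assms(3) by (simp add: R_def at Suc)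
      qed (simp add: R_def at)
    qed
  qed
  finally show ?thesis unfolding R_def .
qed

lemma d_gfam:
  assumes "is_d d" "1 \<le> l" "\<beta> \<in> Bset n l"
  shows "d (gfam n l \<beta>) = (if \<beta> ! 0 = 0 then 0 else gfam (n - 1) l ((\<beta> ! 0 - 1) # tl \<beta>))"
proof -
  have "\<beta> ! (l - 1) \<le> n" "1 \<le> \<beta> ! (l - 1)" "l - 1 < length \<beta>"
    using assms(2,3) nth_le_weight[of "l - 1" \<beta>] by (auto simp: Bset_eq wparts_def)
  then have n: "1 \<le> n" by linarith
  let ?R = "\<lambda>\<beta>. if \<beta> ! 0 = 0 then 0 else gfam (n - 1) l ((\<beta> ! 0 - 1) # tl \<beta>)"
  have "(\<Sum>\<beta>\<in>Bset n l. const (ebeta \<beta> ks) * (d (gfam n l \<beta>) - ?R \<beta>)) = 0" if len: "length ks = l" for ks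
  proof -
    have "(\<Sum>\<beta>\<in>Bset n l. const (ebeta \<beta> ks) * d (gfam n l \<beta>)) = d (gen_lhs n ks)"
      using gfam_spec(2)[OF assms(2), of n] len
      by (simp add: is_d_sum[OF assms(1)] is_d_const_mult[OF assms(1)])
    also have "\<dots> = const (esym 1 ks) * gen_lhs (n - 1) ks" by (rule d_gen_lhs[OF assms(1) n])
    also have "\<dots> = const (esym 1 ks) * (\<Sum>\<beta>\<in>Bset (n - 1) l. const (ebeta \<beta> ks) * gfam (n - 1) l \<beta>)"
      using gfam_spec(2)[OF assms(2), of "n - 1"] len by simp
    also have "\<dots> = (\<Sum>\<beta>\<in>Bset n l. const (ebeta \<beta> ks) * ?R \<beta>)"
      by (rule esym_1_mult_Bset_expansion[OF assms(2) n gfam_spec(1)[OF assms(2)]])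
    finally show ?thesis by (simp add: right_diff_distrib sum_subtractf)
  qed
  then have "d (gfam n l \<beta>) - ?R \<beta> = 0"
    by (intro ebeta_linear_independent_subset[OF Bset_subset_wparts _ assms(3)]) blast
  then show ?thesis by simp
qed

text \<open>For l = 1 the paper indexes B^(1)_n(i) by i = \<beta>_1 - 1, so there \<beta> = [i + 1]; for i = 0,
  d_gfam produces g_(0), which the definition makes 0 since (0) \<notin> B^(1)_0.\<close>

theorem lemma3p2:
  fixes d :: "poly_A \<Rightarrow> poly_A" and n l i :: nat and \<beta> :: "nat list"
  assumes "is_d d"
    and "l \<ge> 1" and "n \<ge> l"
    and "\<beta> \<in> Bset_i n l i"
  shows "d (g \<beta>) = (if i = 0 then 0 else g ((\<beta> ! 0 - 1) # tl \<beta>))"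
proof (cases "l = 1")
  case True
  then have \<beta>: "\<beta> = [i + 1]" "n = i + 1" using assms(4) by (auto simp: Bset_i_def split: if_splits)
  then have "\<beta> \<in> Bset n 1" by (simp add: Bset_def)
  from d_gfam[OF assms(1) _ this] have "d (g \<beta>) = gfam i 1 [i]" using \<beta> by (simp add: g_def)
  moreover have "gfam 0 1 [0] = 0" using gfam_spec(1)[of 1 0] by (simp add: Bset_def)
  ultimately show ?thesis using \<beta> by (simp add: g_def)
next
  case False
  then have \<beta>: "\<beta> \<in> Bset n l" "\<beta> ! 0 = i" using assms(2,4) by (auto simp: Bset_i_def)
  then have len: "length \<beta> = l" and weight: "weight \<beta> = n" by (auto simp: Bset_eq wparts_def)
  then obtain t where t: "\<beta> = i # t" using assms(2) \<beta>(2) by (cases \<beta>) auto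
  have "g \<beta> = gfam n l \<beta>" unfolding g_def weight_def[symmetric] using len weight by simp
  moreover have "g ((i - 1) # t) = gfam (n - 1) l ((i - 1) # t)" if "i \<noteq> 0"
    unfolding g_def weight_def[symmetric] using len weight that by (simp add: t weight_Cons)
  ultimately show ?thesis using d_gfam[OF assms(1,2) \<beta>(1)] by (simp add: t)
qed
end
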